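(* Let $(\Omega,\mathbb B(\Omega),\mu,T)$ be a measure-preserving dynamical system and $\mathbf X$ an $\mathbb R^N$-valued random vector on $(\Omega,\mathbb B(\Omega))$ such that $h_\mu(T)=\lim_{d\to\infty}h_\mu(T,\mathcal P^{\mathbf X}(d))$. Then: (i) If there is $d_0\in\mathbb N$ such that $\mathcal P^{\mathbf X}(d)$ has the Markov property for all $d\ge d_0$, then $h_\mu(T)=\lim_{d\to\infty}h^{\mathbf X}_{\mu,\mathrm{cond}}(T,d)$. (ii) If for some $d\in\mathbb N$ the partition $\mathcal P^{\mathbf X}(d)$ is generating and has the Markov property, then $h_\mu(T)=h^{\mathbf X}_{\mu,\mathrm{cond}}(T,d)$.
   Context: A measure-preserving dynamical system $(\Omega,\mathbb B(\Omega),\mu,T)$ consists of a nonempty topological space $\Omega$ with Borel $\sigma$-algebra $\mathbb B(\Omega)$, a probability measure $\mu$, and a measurable map $T:\Omega\to\Omega$ with $\mu(T^{-1}B)=\mu(B)$ for all $B\in\mathbb B(\Omega)$. For a finite partition $\mathcal P=\{P_0,\dots,P_l\}\subset\mathbb B(\Omega)$ of $\Omega$: $H(\mathcal P)=-\sum_{P\in\mathcal P}\mu(P)\ln\mu(P)$ (with $0\ln0=0$); $\mathcal P_n$ is the partition consisting of the sets $P_{a_0}\cap T^{-1}(P_{a_1})\cap\dots\cap T^{-(n-1)}(P_{a_{n-1}})$, $a_i\in\{0,\dots,l\}$; $h_\mu(T,\mathcal P)=\lim_{n\to\infty}(H(\mathcal P_{n+1})-H(\mathcal P_n))$; the Kolmogorov–Sinai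 entropy is $h_\mu(T)=\sup_{\mathcal P}h_\mu(T,\mathcal P)$ over finite partitions. A finite partition $\mathcal G=\{G_0,\dots,G_l\}\subset\mathbb B(\Omega)$ is generating if, with $\mathbb A$ the $\sigma$-algebra generated by all $T^{-n}(G_i)$, $n\in\mathbb N_0$, for every $B\in\mathbb B(\Omega)$ there is $A\in\mathbb A$ with $\mu(A\triangle B)=0$. A finite partition $\mathcal M=\{M_0,\dots,M_l\}\subset\mathbb B(\Omega)$ has the Markov property (w.r.t. $T,\mu$) if for all $n\in\mathbb N$ and $i_0,\dots,i_n\in\{0,\dots,l\}$ with $\mu(M_{i_0}\cap T^{-1}M_{i_1}\cap\dots\cap T^{-(n-1)}M_{i_{n-1}})>0$, $$\frac{\mu(M_{i_0}\cap T^{-1}M_{i_1}\cap\dots\cap T^{-n}M_{i_n})}{\mu(M_{i_0}\cap T^{-1}M_{i_1}\cap\dots\cap T^{-(n-1)}M_{i_{n-1}})}=\frac{\mu(M_{i_{n-1}}\cap T^{-1}M_{i_n})}{\mu(M_{i_{n-1}})}.$$ Let $\Pi_d$ be the set of permutations of $\{0,1,\dots,d\}$. A vector $(x_0,\dots,x_d)\in\mathbb R^{d+1}$ has ordinal pattern $\pi=(r_0,\dots,r_d)\in\Pi_d$ if $x_{r_0}\ge x_{r_1}\ge\dots\ge x_{r_d}$ and $r_{l-1}>r_l$ whenever $x_{r_{l-1}}=x_{r_l}$. For a random vector $\mathbf X=(X_1,\dots,X_N)$ and $d\in\mathbb N$, the ordinal partition $\mathcal P^{\mathbf X}(d)$ consists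 of the sets $P_{(\pi_1,\dots,\pi_N)}=\{\omega: (X_i(T^{d}\omega),X_i(T^{d-1}\omega),\dots,X_i(T\omega),X_i(\omega))\text{ has ordinal pattern }\pi_i\text{ for } i=1,\dots,N\}$, $\pi_i\in\Pi_d$. Conditional entropy of ordinal patterns: $h^{\mathbf X}_{\mu,\mathrm{cond}}(T,d)=H(\mathcal P^{\mathbf X}(d)_2)-H(\mathcal P^{\mathbf X}(d))$. *)

theory Defs
  imports "HOL-Probability.Probability"
begin

definition mpds :: "'a::topological_space measure \<Rightarrow> ('a \<Rightarrow> 'a) \<Rightarrow> bool" where
  "mpds M T \<longleftrightarrow> prob_space M \<and> sets M = sets (borel :: 'a measure) \<and> T \<in> measurable M M \<and>
     (\<forall>B \<in> sets M. measure M (T -` B \<inter> space M) = measure M B)"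

definition finite_partition :: "'a measure \<Rightarrow> 'a set set \<Rightarrow> bool" where
  "finite_partition M P \<longleftrightarrow> finite P \<and> P \<subseteq> sets M \<and> \<Union>P = space M \<and>
     (\<forall>A\<in>P. \<forall>B\<in>P. A \<noteq> B \<longrightarrow> A \<inter> B = {})"

definition part_entropy :: "'a measure \<Rightarrow> 'a set set \<Rightarrow> real" where
  "part_entropy M P = - (\<Sum>A\<in>P. measure M A * ln (measure M A))"

definition refine :: "'a measure \<Rightarrow> ('a \<Rightarrow> 'a) \<Rightarrow> 'a set set \<Rightarrow> nat \<Rightarrow> 'a set set" where
  "refine M T P n = {space M \<inter> (\<Inter>k<n. (T ^^ k) -` (a k)) | a. \<forall>k<n. a k \<in> P}"

definition part_KS :: "'a measure \<Rightarrow> ('a \<Rightarrow> 'a) \<Rightarrow> 'a set set \<Rightarrow> real" where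
  "part_KS M T P = lim (\<lambda>n. part_entropy M (refine M T P (Suc n)) - part_entropy M (refine M T P n))"

definition KS_entropy :: "'a measure \<Rightarrow> ('a \<Rightarrow> 'a) \<Rightarrow> ereal" where
  "KS_entropy M T = (SUP P \<in> {P. finite_partition M P}. ereal (part_KS M T P))"

definition generating :: "'a measure \<Rightarrow> ('a \<Rightarrow> 'a) \<Rightarrow> 'a set set \<Rightarrow> bool" where
  "generating M T G \<longleftrightarrow>
     (\<forall>B \<in> sets M. \<exists>A \<in> sigma_sets (space M) {(T ^^ n) -` C \<inter> space M | n C. C \<in> G}.
        measure M (A - B \<union> (B - A)) = 0)"

definition markov_prop :: "'a measure \<Rightarrow> ('a \<Rightarrow> 'a) \<Rightarrow> 'a set set \<Rightarrow> bool" where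
  "markov_prop M T P \<longleftrightarrow>
     (\<forall>n::nat \<ge> 1. \<forall>a. (\<forall>k\<le>n. a k \<in> P) \<longrightarrow>
        measure M (space M \<inter> (\<Inter>k<n. (T ^^ k) -` (a k))) > 0 \<longrightarrow>
        measure M (space M \<inter> (\<Inter>k\<le>n. (T ^^ k) -` (a k)))
          / measure M (space M \<inter> (\<Inter>k<n. (T ^^ k) -` (a k)))
        = measure M (a (n - 1) \<inter> T -` (a n) \<inter> space M) / measure M (a (n - 1)))"

definition ord_patterns :: "nat \<Rightarrow> nat list set" where
  "ord_patterns d = {r. distinct r \<and> set r = {0..d}}"

definition has_pattern :: "(nat \<Rightarrow> real) \<Rightarrow> nat \<Rightarrow> nat list \<Rightarrow> bool" where
  "has_pattern x d r \<longleftrightarrow> r \<in> ord_patterns d \<and>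
     (\<forall>l\<in>{1..d}. x (r ! (l - 1)) \<ge> x (r ! l) \<and>
        (x (r ! (l - 1)) = x (r ! l) \<longrightarrow> r ! (l - 1) > r ! l))"

text \<open>Ordinal partition P^X(d): the vector (X_i(T^d w), ..., X_i(T w), X_i(w)) has j-th entry
  X_i(T^(d-j) w).\<close>
definition ordinal_partition ::
  "'a measure \<Rightarrow> ('a \<Rightarrow> 'a) \<Rightarrow> ('a \<Rightarrow> real ^ 'n) \<Rightarrow> nat \<Rightarrow> 'a set set" where
  "ordinal_partition M T X d =
     {{w \<in> space M. \<forall>i. has_pattern (\<lambda>j. X ((T ^^ (d - j)) w) $ i) d (\<pi> i)} | \<pi>.
        \<forall>i. \<pi> i \<in> ord_patterns d}"

definition cond_entropy_ord ::
  "'a measure \<Rightarrow> ('a \<Rightarrow> 'a) \<Rightarrow> ('a \<Rightarrow> real ^ 'n) \<Rightarrow> nat \<Rightarrow> real" where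
  "cond_entropy_ord M T X d =
     part_entropy M (refine M T (ordinal_partition M T X d) 2) - part_entropy M (ordinal_partition M T X d)"

end

theory Submission
  imports Defs "HOL-Library.List_Lexorder"
begin

text \<open>For a Markov partition \<open>P\<close> the measure of a cylinder factors through one-step transition
  probabilities, so the increments \<open>H(P_(n+1)) - H(P_n)\<close> are constant for \<open>n \<ge> 1\<close> and
  \<open>h(T, P) = H(P_2) - H(P)\<close>; part (i) follows since \<open>h(T, P^X(d))\<close> tends to \<open>h(T)\<close>.
  Part (ii) is the Kolmogorov-Sinai generator theorem: the cells of any finite partition \<open>Q\<close>
  are approximated in measure by sets determined by long itineraries through a generating \<open>P\<close>,
  so the conditional entropy \<open>H(Q | P_k)\<close> becomes small, and
  \<open>h(T, Q) \<le> h(T, P_k) + H(Q | P_k) = h(T, P) + H(Q | P_k)\<close>.\<close>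

section \<open>Entropy of simple functions\<close>

definition xlnx :: "real \<Rightarrow> real" where "xlnx x = x * ln x"

lemma xlnx_0 [simp]: "xlnx 0 = 0"
  by (simp add: xlnx_def)

lemma xlnx_mult: "0 \<le> x \<Longrightarrow> 0 \<le> y \<Longrightarrow> xlnx (x * y) = y * xlnx x + x * xlnx y"
  by (cases "x = 0 \<or> y = 0") (auto simp: xlnx_def ln_mult algebra_simps)

lemma minus_xlnx_le_sqrt:
  assumes "0 \<le> x" "x \<le> 1"
  shows "- xlnx x \<le> 2 * sqrt x"
proof (cases "x = 0")
  case False
  define s where "s = sqrt x"
  have s: "0 < s" "x = s * s" using assms False by (auto simp: s_def real_sqrt_mult[symmetric])
  have "ln (1 / s) \<le> 1 / s - 1" using s by (intro ln_le_minus_one) auto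
  then have l: "- ln s \<le> 1 / s - 1" using s by (simp add: ln_div)
  have "- xlnx x = 2 * (s * s) * (- ln s)" using s by (simp add: xlnx_def ln_mult)
  also have "\<dots> \<le> 2 * (s * s) * (1 / s - 1)" using l s by (intro mult_left_mono) auto
  also have "\<dots> \<le> 2 * s" using s by (simp add: field_simps)
  finally show ?thesis by (simp add: s_def)
qed simp

lemma mult_ln_ratio_le:
  fixes p q :: real
  assumes "0 < p" "0 < q"
  shows "p * ln q - p * ln p \<le> q - p"
proof -
  have "p * ln q - p * ln p = p * ln (q / p)" using assms by (simp add: ln_div algebra_simps)
  also have "\<dots> \<le> p * (q / p - 1)" using assms by (intro mult_left_mono ln_le_minus_one) auto
  also have "\<dots> = q - p" using assms by (simp add: field_simps)
  finally show ?thesis .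
qed

lemma mult_ln_ratio3_le:
  fixes a b c r :: real
  assumes "0 \<le> r" "r \<le> a" "r \<le> b" "r \<le> c"
  shows "r * ln a + r * ln b - r * ln c - r * ln r \<le> a * b / c - r"
proof (cases "r = 0")
  case False
  then have pos: "0 < r" "0 < a" "0 < b" "0 < c" using assms by auto
  have "r * ln a + r * ln b - r * ln c - r * ln r = r * ln (a * b / c) - r * ln r"
    using pos by (simp add: ln_mult ln_div algebra_simps)
  also have "\<dots> \<le> a * b / c - r" using pos by (intro mult_ln_ratio_le) auto
  finally show ?thesis .
qed (use assms in simp)

context prob_space
begin

definition pmass :: "('a \<Rightarrow> 'b) \<Rightarrow> 'b \<Rightarrow> real" where
  "pmass f y = prob (f -` {y} \<inter> space M)"

definition dentropy :: "('a \<Rightarrow> 'b) \<Rightarrow> real" where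
  "dentropy f = - (\<Sum>y\<in>f ` space M. xlnx (pmass f y))"

definition cond_dentropy :: "('a \<Rightarrow> 'b) \<Rightarrow> ('a \<Rightarrow> 'c) \<Rightarrow> real" where
  "cond_dentropy f g = dentropy (\<lambda>w. (f w, g w)) - dentropy g"

lemma pmass_nonneg: "0 \<le> pmass f y"
  by (simp add: pmass_def)

lemma pmass_le_1: "pmass f y \<le> 1"
  by (simp add: pmass_def)

lemma pmass_eq_0: "y \<notin> f ` space M \<Longrightarrow> pmass f y = 0"
  unfolding pmass_def by (subgoal_tac "f -` {y} \<inter> space M = {}") auto

lemma dentropy_eq_sum_ln: "dentropy f = - (\<Sum>y\<in>f ` space M. pmass f y * ln (pmass f y))"
  by (simp add: dentropy_def xlnx_def)

lemma dentropy_eq_sum_superset: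
  assumes "finite S" "f ` space M \<subseteq> S"
  shows "dentropy f = - (\<Sum>y\<in>S. xlnx (pmass f y))"
  unfolding dentropy_def
  by (rule arg_cong[where f=uminus], rule sum.mono_neutral_left) (auto simp: assms pmass_eq_0)

lemma pmass_eq_sum_fibre:
  assumes g: "simple_function M g" and fg: "\<And>w. w \<in> space M \<Longrightarrow> f w = \<phi> (g w)"
  shows "pmass f x = (\<Sum>y\<in>{y\<in>g ` space M. \<phi> y = x}. pmass g y)"
proof -
  have "f -` {x} \<inter> space M = (\<Union>y\<in>{y\<in>g ` space M. \<phi> y = x}. g -` {y} \<inter> space M)"
    using fg by auto
  then have "pmass f x = prob (\<Union>y\<in>{y\<in>g ` space M. \<phi> y = x}. g -` {y} \<inter> space M)"
    by (simp add: pmass_def)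
  also have "\<dots> = (\<Sum>y\<in>{y\<in>g ` space M. \<phi> y = x}. prob (g -` {y} \<inter> space M))"
    using g by (intro measure_finite_Union) (auto simp: simple_function_def disjoint_family_on_def)
  finally show ?thesis by (simp add: pmass_def)
qed

lemma sum_pmass:
  assumes g: "simple_function M g"
  shows "(\<Sum>y\<in>g ` space M. pmass g y) = 1"
  using pmass_eq_sum_fibre[OF g, of "\<lambda>w. ()" "\<lambda>_. ()" "()"] by (simp add: pmass_def prob_space)

lemma sum_pmass_comp:
  assumes g: "simple_function M g" and fg: "\<And>w. w \<in> space M \<Longrightarrow> f w = \<phi> (g w)"
  shows "(\<Sum>y\<in>g ` space M. pmass g y * c (\<phi> y)) = (\<Sum>x\<in>f ` space M. pmass f x * c x)"
proof -
  have fin: "finite (g ` space M)" using g by (simp add: simple_function_def)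
  have img: "\<phi> ` g ` space M = f ` space M" using fg by (auto simp: image_iff)
  have "(\<Sum>y\<in>g ` space M. pmass g y * c (\<phi> y)) =
     (\<Sum>x\<in>f ` space M. \<Sum>y\<in>{y\<in>g ` space M. \<phi> y = x}. pmass g y * c (\<phi> y))"
    unfolding img[symmetric] by (rule sum.image_gen[OF fin])
  also have "\<dots> = (\<Sum>x\<in>f ` space M. (\<Sum>y\<in>{y\<in>g ` space M. \<phi> y = x}. pmass g y) * c x)"
    by (simp add: sum_distrib_right)
  also have "\<dots> = (\<Sum>x\<in>f ` space M. pmass f x * c x)"
    using pmass_eq_sum_fibre[of g f \<phi>, OF g fg] by simp
  finally show ?thesis .
qed

lemma pmass_le_pmass_comp:
  assumes g: "simple_function M g" and fg: "\<And>w. w \<in> space M \<Longrightarrow> f w = \<phi> (g w)"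
    and y: "y \<in> g ` space M"
  shows "pmass g y \<le> pmass f (\<phi> y)"
proof -
  have "finite (g ` space M)" using g by (simp add: simple_function_def)
  then have "pmass g y \<le> (\<Sum>y'\<in>{y'\<in>g ` space M. \<phi> y' = \<phi> y}. pmass g y')"
    using y by (intro member_le_sum) (auto simp: pmass_nonneg)
  then show ?thesis using pmass_eq_sum_fibre[of g f \<phi>, OF g fg] by simp
qed

lemma dentropy_comp_le:
  assumes g: "simple_function M g" and fg: "\<And>w. w \<in> space M \<Longrightarrow> f w = \<phi> (g w)"
  shows "dentropy f \<le> dentropy g"
proof -
  have "pmass g y * ln (pmass g y) \<le> pmass g y * ln (pmass f (\<phi> y))" if y: "y \<in> g ` space M" for y
  proof (cases "pmass g y = 0")
    case False
    then show ?thesis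
      using pmass_nonneg[of g y] pmass_le_pmass_comp[of g f \<phi> y, OF g fg y] by (intro mult_left_mono) auto
  qed simp
  then have "(\<Sum>y\<in>g ` space M. pmass g y * ln (pmass g y))
      \<le> (\<Sum>y\<in>g ` space M. pmass g y * ln (pmass f (\<phi> y)))"
    by (rule sum_mono)
  then show ?thesis
    using sum_pmass_comp[of g f \<phi> "\<lambda>x. ln (pmass f x)", OF g fg] by (simp add: dentropy_eq_sum_ln)
qed

lemma dentropy_eq_if_mutually_determined:
  assumes "simple_function M f" "simple_function M g"
    and "\<And>w. w \<in> space M \<Longrightarrow> f w = \<phi> (g w)" "\<And>w. w \<in> space M \<Longrightarrow> g w = \<psi> (f w)"
  shows "dentropy f = dentropy g"
  using dentropy_comp_le[of g f \<phi>, OF assms(2,3)] dentropy_comp_le[of f g \<psi>, OF assms(1,4)]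
  by (rule antisym)

lemma dentropy_const: "dentropy (\<lambda>w. c) = 0"
proof -
  have "(\<lambda>w. c) ` space M = {c}" using not_empty by auto
  moreover have "pmass (\<lambda>w. c) c = 1" by (simp add: pmass_def prob_space)
  ultimately show ?thesis by (simp add: dentropy_def xlnx_def)
qed

lemma dentropy_le_add_cond: "simple_function M g \<Longrightarrow> simple_function M f \<Longrightarrow>
    dentropy f \<le> dentropy g + cond_dentropy f g"
  using dentropy_comp_le[of "\<lambda>w. (f w, g w)" f fst] by (simp add: cond_dentropy_def)

lemma cond_dentropy_eq_if_mutually_determined:
  assumes "simple_function M f" "simple_function M f'" "simple_function M g" "simple_function M g'"
    and "\<And>w. w \<in> space M \<Longrightarrow> f' w = \<phi> (f w)" "\<And>w. w \<in> space M \<Longrightarrow> f w = \<phi>' (f' w)"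
    and "\<And>w. w \<in> space M \<Longrightarrow> g' w = \<psi> (g w)" "\<And>w. w \<in> space M \<Longrightarrow> g w = \<psi>' (g' w)"
  shows "cond_dentropy f g = cond_dentropy f' g'"
proof -
  have "dentropy g = dentropy g'"
    by (rule dentropy_eq_if_mutually_determined[of g g' \<psi>' \<psi>]) (use assms in auto)
  moreover have "dentropy (\<lambda>w. (f w, g w)) = dentropy (\<lambda>w. (f' w, g' w))"
    by (rule dentropy_eq_if_mutually_determined[of _ _ "map_prod \<phi>' \<psi>'" "map_prod \<phi> \<psi>"])
      (use assms in \<open>auto intro: simple_function_Pair\<close>)
  ultimately show ?thesis by (simp add: cond_dentropy_def)
qed

lemma cond_dentropy_Pair:
  assumes "simple_function M a" "simple_function M b" "simple_function M g"
  shows "cond_dentropy (\<lambda>w. (a w, b w)) g = cond_dentropy a (\<lambda>w. (b w, g w)) + cond_dentropy b g"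
proof -
  have "dentropy (\<lambda>w. ((a w, b w), g w)) = dentropy (\<lambda>w. (a w, b w, g w))"
    by (rule dentropy_eq_if_mutually_determined[where \<phi>="\<lambda>(a, b, g). ((a, b), g)"
          and \<psi>="\<lambda>((a, b), g). (a, b, g)"]) (use assms in auto)
  then show ?thesis by (simp add: cond_dentropy_def)
qed

lemma sum_pmass_Pair_fst:
  assumes f: "simple_function M f" and h: "simple_function M h"
  shows "(\<Sum>x\<in>f ` space M. pmass (\<lambda>w. (f w, h w)) (x, z)) = pmass h z"
proof -
  have fh: "simple_function M (\<lambda>w. (f w, h w))" using f h by (rule simple_function_Pair)
  have "(\<Sum>x\<in>f ` space M. pmass (\<lambda>w. (f w, h w)) (x, z))
      = (\<Sum>p\<in>(\<lambda>x. (x, z)) ` f ` space M. pmass (\<lambda>w. (f w, h w)) p)"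
    by (subst sum.reindex) (auto simp: inj_on_def)
  also have "\<dots> = (\<Sum>p\<in>{p\<in>(\<lambda>w. (f w, h w)) ` space M. snd p = z}. pmass (\<lambda>w. (f w, h w)) p)"
    using f by (intro sum.mono_neutral_right) (auto simp: simple_function_def, metis pmass_eq_0)
  also have "\<dots> = pmass h z"
    by (rule pmass_eq_sum_fibre[OF fh, symmetric]) simp
  finally show ?thesis .
qed

text \<open>The weights \<open>p(x,z) p(y,z) / p(z)\<close> form a sub-probability on triples; comparing them with
  the joint law by \<open>ln t \<le> t - 1\<close> is the classical proof of strong subadditivity.\<close>

lemma sum_pmass_product_div_le_1:
  assumes f: "simple_function M f" and g: "simple_function M g" and h: "simple_function M h"
  shows "(\<Sum>(x, y, z)\<in>f ` space M \<times> g ` space M \<times> h ` space M.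
            pmass (\<lambda>w. (f w, h w)) (x, z) * pmass (\<lambda>w. (g w, h w)) (y, z) / pmass h z) \<le> 1"
proof -
  let ?F = "f ` space M" and ?G = "g ` space M" and ?H = "h ` space M"
  have "(\<Sum>(x, y, z)\<in>?F \<times> ?G \<times> ?H.
            pmass (\<lambda>w. (f w, h w)) (x, z) * pmass (\<lambda>w. (g w, h w)) (y, z) / pmass h z)
      = (\<Sum>x\<in>?F. \<Sum>y\<in>?G. \<Sum>z\<in>?H.
            pmass (\<lambda>w. (f w, h w)) (x, z) * pmass (\<lambda>w. (g w, h w)) (y, z) / pmass h z)"
    by (simp add: sum.cartesian_product)
  also have "\<dots> = (\<Sum>z\<in>?H. \<Sum>x\<in>?F. \<Sum>y\<in>?G.
            pmass (\<lambda>w. (f w, h w)) (x, z) * pmass (\<lambda>w. (g w, h w)) (y, z) / pmass h z)"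
    by (subst sum.swap, rule sum.cong[OF refl], rule sum.swap)
  also have "\<dots> = (\<Sum>z\<in>?H. (\<Sum>x\<in>?F. pmass (\<lambda>w. (f w, h w)) (x, z)) *
            (\<Sum>y\<in>?G. pmass (\<lambda>w. (g w, h w)) (y, z)) / pmass h z)"
    by (simp add: sum_product sum_divide_distrib)
  also have "\<dots> = (\<Sum>z\<in>?H. pmass h z)"
    using sum_pmass_Pair_fst[OF f h] sum_pmass_Pair_fst[OF g h] by (intro sum.cong) auto
  finally show ?thesis using sum_pmass[OF h] by simp
qed

lemma cond_dentropy_Pair_le:
  fixes f :: "'a \<Rightarrow> 'b" and g :: "'a \<Rightarrow> 'c" and h :: "'a \<Rightarrow> 'd"
  assumes f: "simple_function M f" and g: "simple_function M g" and h: "simple_function M h"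
  shows "cond_dentropy f (\<lambda>w. (g w, h w)) \<le> cond_dentropy f h"
proof -
  define X where "X = (\<lambda>w. (f w, g w, h w))"
  define fh where "fh = (\<lambda>w. (f w, h w))"
  define gh where "gh = (\<lambda>w. (g w, h w))"
  have X: "simple_function M X" and sfh: "simple_function M fh" and sgh: "simple_function M gh"
    unfolding X_def fh_def gh_def using f g h by (auto intro: simple_function_Pair)
  let ?R = "X ` space M"
  define r where "r t = pmass X t" for t
  define A where "A t = pmass fh (fst t, snd (snd t))" for t :: "'b \<times> 'c \<times> 'd"
  define B where "B t = pmass gh (snd t)" for t :: "'b \<times> 'c \<times> 'd"
  define C where "C t = pmass h (snd (snd t))" for t :: "'b \<times> 'c \<times> 'd"
  have XA: "fh w = (\<lambda>t. (fst t, snd (snd t))) (X w)"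
    and XB: "gh w = snd (X w)" and XC: "h w = snd (snd (X w))" for w
    by (simp_all add: X_def fh_def gh_def)
  have sums: "(\<Sum>t\<in>?R. r t * ln (A t)) = - dentropy fh" "(\<Sum>t\<in>?R. r t * ln (B t)) = - dentropy gh"
    "(\<Sum>t\<in>?R. r t * ln (C t)) = - dentropy h" "(\<Sum>t\<in>?R. r t * ln (r t)) = - dentropy X"
    "(\<Sum>t\<in>?R. r t) = 1"
    using sum_pmass_comp[of X fh "\<lambda>t. (fst t, snd (snd t))" "\<lambda>x. ln (pmass fh x)", OF X XA]
      sum_pmass_comp[of X gh snd "\<lambda>x. ln (pmass gh x)", OF X XB]
      sum_pmass_comp[of X h "\<lambda>t. snd (snd t)" "\<lambda>x. ln (pmass h x)", OF X XC] sum_pmass[OF X]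
    by (simp_all add: dentropy_eq_sum_ln r_def A_def B_def C_def)
  have "r t * ln (A t) + r t * ln (B t) - r t * ln (C t) - r t * ln (r t) \<le> A t * B t / C t - r t"
    if "t \<in> ?R" for t
    using pmass_le_pmass_comp[of X fh "\<lambda>t. (fst t, snd (snd t))", OF X XA that] pmass_le_pmass_comp[of X gh snd, OF X XB that]
      pmass_le_pmass_comp[of X h "\<lambda>t. snd (snd t)", OF X XC that]
    by (intro mult_ln_ratio3_le) (auto simp: r_def A_def B_def C_def pmass_nonneg)
  then have "(\<Sum>t\<in>?R. r t * ln (A t) + r t * ln (B t) - r t * ln (C t) - r t * ln (r t))
      \<le> (\<Sum>t\<in>?R. A t * B t / C t - r t)"
    by (rule sum_mono)
  moreover have "(\<Sum>t\<in>?R. A t * B t / C t) \<le> 1"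
  proof -
    let ?S = "f ` space M \<times> g ` space M \<times> h ` space M"
    have "(\<Sum>t\<in>?R. A t * B t / C t) \<le> (\<Sum>t\<in>?S. A t * B t / C t)"
      using f g h by (intro sum_mono2) (auto simp: X_def A_def B_def C_def pmass_nonneg simple_function_def)
    also have "\<dots> \<le> 1"
      using sum_pmass_product_div_le_1[OF f g h] by (simp add: A_def B_def C_def fh_def gh_def split_beta)
    finally show ?thesis .
  qed
  ultimately have "- dentropy fh - dentropy gh + dentropy h + dentropy X \<le> 0"
    using sums by (simp add: sum.distrib sum_subtractf)
  then show ?thesis by (simp add: cond_dentropy_def X_def fh_def gh_def)
qed

lemma cond_dentropy_le_comp:
  assumes q: "simple_function M q" and r: "simple_function M r"
  shows "cond_dentropy q r \<le> cond_dentropy q (\<lambda>w. \<phi> (r w))"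
proof -
  have r': "simple_function M (\<lambda>w. \<phi> (r w))" using r by (rule simple_function_compose1)
  have "cond_dentropy q r = cond_dentropy q (\<lambda>w. (r w, \<phi> (r w)))"
    by (rule cond_dentropy_eq_if_mutually_determined[where \<phi>=id and \<phi>'=id and \<psi>="\<lambda>x. (x, \<phi> x)"
          and \<psi>'=fst]) (use q r r' in \<open>auto intro: simple_function_Pair\<close>)
  also have "\<dots> \<le> cond_dentropy q (\<lambda>w. \<phi> (r w))"
    by (rule cond_dentropy_Pair_le[OF q r r'])
  finally show ?thesis .
qed

lemma cond_dentropy_Pair_Pair_le:
  assumes "simple_function M a" "simple_function M b" "simple_function M c" "simple_function M d"
  shows "cond_dentropy (\<lambda>w. (a w, b w)) (\<lambda>w. (c w, d w)) \<le> cond_dentropy a c + cond_dentropy b d"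
proof -
  have "cond_dentropy (\<lambda>w. (a w, b w)) (\<lambda>w. (c w, d w))
      = cond_dentropy a (\<lambda>w. (b w, c w, d w)) + cond_dentropy b (\<lambda>w. (c w, d w))"
    by (rule cond_dentropy_Pair) (use assms in \<open>auto intro: simple_function_Pair\<close>)
  also have "cond_dentropy a (\<lambda>w. (b w, c w, d w)) \<le> cond_dentropy a c"
    using cond_dentropy_le_comp[of a "\<lambda>w. (b w, c w, d w)" "\<lambda>t. fst (snd t)"] assms
    by (auto intro: simple_function_Pair)
  also have "cond_dentropy b (\<lambda>w. (c w, d w)) \<le> cond_dentropy b d"
    using cond_dentropy_le_comp[of b "\<lambda>w. (c w, d w)" snd] assms by (auto intro: simple_function_Pair)
  finally show ?thesis by simp
qed

lemma pmass_Pair_ln_ratio_le: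
  fixes q r :: "'a \<Rightarrow> 'b"
  assumes q: "simple_function M q" and r: "simple_function M r"
    and e: "prob {w\<in>space M. q w \<noteq> r w} \<le> e" "e \<le> 1"
  shows "pmass (\<lambda>w. (q w, r w)) t * ln (pmass r (snd t))
    - pmass (\<lambda>w. (q w, r w)) t * ln (pmass (\<lambda>w. (q w, r w)) t) \<le> 2 * sqrt e"
    (is "?p * ln ?P - ?p * ln ?p \<le> _")
proof -
  define X where "X = (\<lambda>w. (q w, r w))"
  have X: "simple_function M X" unfolding X_def using q r by (rule simple_function_Pair)
  have XS: "r w = snd (X w)" for w by (simp add: X_def)
  let ?E = "{w\<in>space M. q w \<noteq> r w}"
  have Es: "?E \<in> sets M"
    using simple_functionD(2)[OF X, of "{t. fst t \<noteq> snd t}"] by (simp add: X_def vimage_def Int_def conj_commute)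
  have e0: "0 \<le> e" using e(1) measure_nonneg[of M ?E] by linarith
  show ?thesis
  proof (cases "?p = 0")
    case False
    then have p0: "0 < ?p" using pmass_nonneg[of X t] by (simp add: X_def)
    then have "t \<in> X ` space M" using pmass_eq_0 by (force simp: X_def)
    then have pP: "?p \<le> ?P" using pmass_le_pmass_comp[of X r snd, OF X XS] by (simp add: X_def)
    show ?thesis
    proof (cases "fst t = snd t")
      case True
      have sub: "X -` {t} \<inter> space M \<subseteq> r -` {snd t} \<inter> space M" by (auto simp: X_def)
      have "?p * ln ?P - ?p * ln ?p \<le> ?P - ?p" using p0 pP by (intro mult_ln_ratio_le) auto
      also have "\<dots> = prob ((r -` {snd t} \<inter> space M) - (X -` {t} \<inter> space M))"
        unfolding pmass_def X_def[symmetric] using sub simple_functionD(2)[OF X] simple_functionD(2)[OF r]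
        by (subst finite_measure_Diff) auto
      also have "\<dots> \<le> prob ?E"
        using True by (intro finite_measure_mono[OF _ Es]) (auto simp: X_def prod_eq_iff)
      also have "\<dots> \<le> sqrt e"
        using e e0 by (intro order.trans[OF _ real_le_rsqrt]) (auto simp: power2_eq_square mult_left_le_one_le)
      finally show ?thesis using real_sqrt_ge_zero[OF e0] by linarith
    next
      case False
      have "?p \<le> prob ?E" unfolding pmass_def
        using False by (intro finite_measure_mono[OF _ Es]) auto
      then have "sqrt ?p \<le> sqrt e" using e(1) by simp
      moreover have "?p * ln ?P \<le> 0"
        using p0 pP pmass_le_1[of r "snd t"] by (intro mult_nonneg_nonpos) auto
      moreover have "- xlnx ?p \<le> 2 * sqrt ?p"
        using pmass_nonneg pmass_le_1 by (rule minus_xlnx_le_sqrt)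
      ultimately show ?thesis unfolding xlnx_def by linarith
    qed
  qed (use e0 in simp)
qed

lemma cond_dentropy_le_of_prob_neq:
  fixes q r :: "'a \<Rightarrow> 'b"
  assumes q: "simple_function M q" and r: "simple_function M r"
    and qQ: "q ` space M \<subseteq> Q" and rQ: "r ` space M \<subseteq> Q" and Q: "finite Q"
    and e: "prob {w\<in>space M. q w \<noteq> r w} \<le> e" "e \<le> 1"
  shows "cond_dentropy q r \<le> real (card Q) ^ 2 * (2 * sqrt e)"
proof -
  define X where "X = (\<lambda>w. (q w, r w))"
  have X: "simple_function M X" unfolding X_def using q r by (rule simple_function_Pair)
  have XS: "r w = snd (X w)" for w by (simp add: X_def)
  let ?R = "X ` space M"
  have "cond_dentropy q r = (\<Sum>t\<in>?R. pmass X t * ln (pmass r (snd t)) - pmass X t * ln (pmass X t))"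
    using sum_pmass_comp[of X r snd "\<lambda>y. ln (pmass r y)", OF X XS]
    by (simp add: cond_dentropy_def dentropy_eq_sum_ln sum_subtractf X_def)
  also have "\<dots> \<le> real (card ?R) * (2 * sqrt e)"
    using sum_mono[of ?R _ "\<lambda>_. 2 * sqrt e"] pmass_Pair_ln_ratio_le[OF q r e] by (simp add: X_def)
  also have "\<dots> \<le> real (card Q) ^ 2 * (2 * sqrt e)"
  proof (rule mult_right_mono)
    have "card ?R \<le> card (Q \<times> Q)" using qQ rQ Q by (intro card_mono) (auto simp: X_def)
    then show "real (card ?R) \<le> real (card Q) ^ 2"
      by (simp add: card_cartesian_product power2_eq_square flip: of_nat_mult)
  qed (use order.trans[OF measure_nonneg e(1)] in simp)
  finally show ?thesis .
qed

lemma prob_sym_diff_le: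
  assumes "A \<in> events" "B \<in> events" "C \<in> events"
  shows "prob (sym_diff A C) \<le> prob (sym_diff A B) + prob (sym_diff B C)"
proof -
  have "prob (sym_diff A C) \<le> prob (sym_diff A B \<union> sym_diff B C)"
    using assms by (intro finite_measure_mono) auto
  also have "\<dots> \<le> prob (sym_diff A B) + prob (sym_diff B C)"
    using assms by (intro measure_Un_le) auto
  finally show ?thesis .
qed

end

section \<open>Entropy rates in a measure-preserving system\<close>

lemma le_limit_of_le_averages:
  fixes b :: "nat \<Rightarrow> real"
  assumes dec: "decseq b" and lim: "b \<longlonglongrightarrow> L" and avg: "\<And>n. n \<ge> 1 \<Longrightarrow> x \<le> (\<Sum>k<n. b k) / n"
  shows "x \<le> L"
proof -
  have "x \<le> b m" for m
  proof -
    define K where "K = (\<Sum>k<m. b k) - real m * b m"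
    have "x \<le> b m + K / real n" if n: "max m 1 \<le> n" for n
    proof -
      have "(\<Sum>k<n. b k) = (\<Sum>k<m. b k) + (\<Sum>k\<in>{m..<n}. b k)"
        using n by (subst sum.union_disjoint[symmetric]) (auto intro!: sum.cong)
      also have "(\<Sum>k\<in>{m..<n}. b k) \<le> (\<Sum>k\<in>{m..<n}. b m)"
        using dec by (intro sum_mono) (auto simp: decseq_def)
      finally have "(\<Sum>k<n. b k) / n \<le> ((\<Sum>k<m. b k) + (real n - real m) * b m) / n"
        using n by (intro divide_right_mono) (auto simp: of_nat_diff)
      also have "\<dots> = b m + K / real n" using n by (simp add: K_def field_simps)
      finally show ?thesis using avg[of n] n by simp
    qed
    moreover have "(\<lambda>n. b m + K / real n) \<longlonglongrightarrow> b m + 0"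
      by (intro tendsto_intros)
    ultimately show ?thesis
      by (intro LIMSEQ_le_const[where a=x]) (auto intro!: exI[of _ "max m 1"])
  qed
  then show ?thesis using lim by (intro LIMSEQ_le_const) auto
qed

lemma funpow_apply_funpow: "(f ^^ i) ((f ^^ j) x) = (f ^^ (i + j)) x"
  by (simp add: funpow_add)

locale mpt = prob_space M for M :: "'a measure" +
  fixes T :: "'a \<Rightarrow> 'a"
  assumes measurable_T: "T \<in> measurable M M"
    and measure_T_vimage: "\<And>B. B \<in> sets M \<Longrightarrow> measure M (T -` B \<inter> space M) = measure M B"
begin

lemma measurable_funpow: "T ^^ n \<in> measurable M M"
  by (rule measurable_compose_n[OF measurable_T])

lemma funpow_in_space: "w \<in> space M \<Longrightarrow> (T ^^ n) w \<in> space M"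
  using measurable_space[OF measurable_funpow] by blast

lemma measure_funpow_vimage: "B \<in> sets M \<Longrightarrow> measure M ((T ^^ n) -` B \<inter> space M) = measure M B"
proof (induction n arbitrary: B)
  case 0
  then show ?case using sets.sets_into_space by (simp add: Int_absorb2)
next
  case (Suc n)
  have "(T ^^ Suc n) -` B \<inter> space M = T -` ((T ^^ n) -` B \<inter> space M) \<inter> space M"
    using measurable_space[OF measurable_T] by (auto simp: funpow_swap1)
  then show ?case
    using measure_T_vimage[OF measurable_sets[OF measurable_funpow Suc.prems]] Suc by (simp only:)
qed

lemma dentropy_comp_funpow:
  assumes f: "simple_function M f"
  shows "dentropy (\<lambda>w. f ((T ^^ n) w)) = dentropy f"
proof -
  have pmass_eq: "pmass (\<lambda>w. f ((T ^^ n) w)) y = pmass f y" for y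
  proof -
    have "(\<lambda>w. f ((T ^^ n) w)) -` {y} \<inter> space M = (T ^^ n) -` (f -` {y} \<inter> space M) \<inter> space M"
      using funpow_in_space by auto
    then show ?thesis
      unfolding pmass_def using measure_funpow_vimage[OF simple_functionD(2)[OF f]] by metis
  qed
  have "(\<lambda>w. f ((T ^^ n) w)) ` space M \<subseteq> f ` space M" using funpow_in_space by auto
  then have "dentropy (\<lambda>w. f ((T ^^ n) w)) = - (\<Sum>y\<in>f ` space M. xlnx (pmass (\<lambda>w. f ((T ^^ n) w)) y))"
    using f by (intro dentropy_eq_sum_superset) (auto simp: simple_function_def)
  then show ?thesis by (simp add: pmass_eq dentropy_def)
qed

lemma cond_dentropy_comp_funpow:
  "simple_function M q \<Longrightarrow> simple_function M r \<Longrightarrow>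
    cond_dentropy (\<lambda>w. q ((T ^^ n) w)) (\<lambda>w. r ((T ^^ n) w)) = cond_dentropy q r"
  using dentropy_comp_funpow[of r n] dentropy_comp_funpow[of "\<lambda>w. (q w, r w)" n]
  by (simp add: cond_dentropy_def simple_function_Pair)

definition itinerary :: "('a \<Rightarrow> 'b) \<Rightarrow> nat \<Rightarrow> 'a \<Rightarrow> 'b list" where
  "itinerary g n w = map (\<lambda>k. g ((T ^^ k) w)) [0..<n]"

lemma itinerary_0: "itinerary g 0 = (\<lambda>w. [])"
  by (simp add: itinerary_def fun_eq_iff)

lemma itinerary_Suc: "itinerary g (Suc n) w = itinerary g n w @ [g ((T ^^ n) w)]"
  by (simp add: itinerary_def)

lemma itinerary_Suc': "itinerary g (Suc n) w = g w # itinerary g n (T w)"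
  by (simp add: itinerary_def upt_conv_Cons map_Suc_upt[symmetric] funpow_swap1 del: upt_Suc)

lemma length_itinerary [simp]: "length (itinerary g n w) = n"
  by (simp add: itinerary_def)

lemma nth_itinerary: "k < n \<Longrightarrow> itinerary g n w ! k = g ((T ^^ k) w)"
  by (simp add: itinerary_def)

lemma take_itinerary: "k \<le> n \<Longrightarrow> take k (itinerary g n w) = itinerary g k w"
  by (simp add: itinerary_def take_map)

lemma simple_function_itinerary: "simple_function M g \<Longrightarrow> simple_function M (itinerary g n)"
proof (induction n)
  case (Suc n)
  have "simple_function M (\<lambda>w. (itinerary g n w, g ((T ^^ n) w)))"
    using Suc by (intro simple_function_Pair simple_function_comp[OF measurable_funpow])
  from simple_function_compose[OF this, of "\<lambda>p. fst p @ [snd p]"] show ?case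
    by (simp add: comp_def itinerary_Suc[abs_def])
qed (simp add: itinerary_0)

definition entropy_increment :: "('a \<Rightarrow> 'b) \<Rightarrow> nat \<Rightarrow> real" where
  "entropy_increment g n = dentropy (itinerary g (Suc n)) - dentropy (itinerary g n)"

definition entropy_rate :: "('a \<Rightarrow> 'b) \<Rightarrow> real" where
  "entropy_rate g = lim (entropy_increment g)"

lemma entropy_increment_eq_cond_dentropy:
  assumes g: "simple_function M g"
  shows "entropy_increment g n = cond_dentropy g (\<lambda>w. itinerary g n (T w))"
proof -
  have V: "simple_function M (\<lambda>w. itinerary g n (T w))"
    by (rule simple_function_comp[OF measurable_T simple_function_itinerary[OF g]])
  have "dentropy (itinerary g (Suc n)) = dentropy (\<lambda>w. (g w, itinerary g n (T w)))"
    by (rule dentropy_eq_if_mutually_determined[where \<phi>="\<lambda>p. fst p # snd p" and \<psi>="\<lambda>xs. (hd xs, tl xs)"])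
       (use g V simple_function_itinerary in \<open>auto simp: itinerary_Suc'\<close>)
  moreover have "dentropy (\<lambda>w. itinerary g n (T w)) = dentropy (itinerary g n)"
    using dentropy_comp_funpow[of "itinerary g n" 1, OF simple_function_itinerary[OF g]] by simp
  ultimately show ?thesis by (simp add: entropy_increment_def cond_dentropy_def)
qed

lemma entropy_increment_nonneg:
  assumes g: "simple_function M g"
  shows "0 \<le> entropy_increment g n"
  using dentropy_comp_le[of "\<lambda>w. (g w, itinerary g n (T w))" "\<lambda>w. itinerary g n (T w)" snd]
    simple_function_comp[OF measurable_T simple_function_itinerary[OF g]] g
  by (simp add: entropy_increment_eq_cond_dentropy cond_dentropy_def simple_function_Pair)

lemma entropy_increment_Suc_le:
  assumes g: "simple_function M g"
  shows "entropy_increment g (Suc n) \<le> entropy_increment g n"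
proof -
  define V where "V = (\<lambda>w. itinerary g n (T w))"
  define e where "e = (\<lambda>w. g ((T ^^ n) (T w)))"
  have V: "simple_function M V" and e: "simple_function M e" unfolding V_def e_def
    by (auto intro!: simple_function_comp[OF measurable_T] simple_function_itinerary g
        simple_function_comp[OF measurable_funpow])
  have VS: "itinerary g (Suc n) (T w) = V w @ [e w]" for w by (simp add: V_def e_def itinerary_Suc)
  have VS': "simple_function M (\<lambda>w. V w @ [e w])"
    using simple_function_comp[OF measurable_T simple_function_itinerary[OF g], of "Suc n"]
    by (simp add: VS comp_def)
  have "entropy_increment g (Suc n) = cond_dentropy g (\<lambda>w. (e w, V w))"
    unfolding entropy_increment_eq_cond_dentropy[OF g]
    by (rule cond_dentropy_eq_if_mutually_determined[where \<phi>=id and \<phi>'=id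
          and \<psi>="\<lambda>ys. (last ys, butlast ys)" and \<psi>'="\<lambda>(y, xs). xs @ [y]"])
       (use g V e VS' in \<open>auto simp: VS intro: simple_function_Pair\<close>)
  also have "\<dots> \<le> cond_dentropy g V" by (rule cond_dentropy_Pair_le[OF g e V])
  finally show ?thesis by (simp add: entropy_increment_eq_cond_dentropy[OF g] V_def)
qed

lemma dentropy_itinerary_eq_sum: "dentropy (itinerary g n) = (\<Sum>k<n. entropy_increment g k)"
  using sum_lessThan_telescope[of "\<lambda>k. dentropy (itinerary g k)" n]
  by (simp add: entropy_increment_def itinerary_0 dentropy_const)

lemma entropy_increment_tendsto:
  assumes g: "simple_function M g"
  shows "entropy_increment g \<longlonglongrightarrow> entropy_rate g" and "decseq (entropy_increment g)"
    and "entropy_rate g \<le> entropy_increment g n"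
proof -
  show dec: "decseq (entropy_increment g)"
    using entropy_increment_Suc_le[OF g] by (simp add: decseq_SucI)
  obtain L where L: "entropy_increment g \<longlonglongrightarrow> L" "\<forall>i. L \<le> entropy_increment g i"
    using decseq_convergent[OF dec, of 0] entropy_increment_nonneg[OF g] by blast
  moreover have "entropy_rate g = L" unfolding entropy_rate_def using L by (intro limI)
  ultimately show "entropy_increment g \<longlonglongrightarrow> entropy_rate g" "entropy_rate g \<le> entropy_increment g n"
    by auto
qed

lemma cond_dentropy_itinerary_le:
  assumes q: "simple_function M q" and r: "simple_function M r"
  shows "cond_dentropy (itinerary q n) (itinerary r n) \<le> real n * cond_dentropy q r"
proof (induction n)
  case 0
  then show ?case by (simp add: itinerary_0 cond_dentropy_def dentropy_const)
next
  case (Suc n)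
  let ?A = "itinerary q n" and ?C = "itinerary r n"
  let ?B = "\<lambda>w. q ((T ^^ n) w)" and ?D = "\<lambda>w. r ((T ^^ n) w)"
  have s: "simple_function M ?A" "simple_function M ?B" "simple_function M ?C" "simple_function M ?D"
    "simple_function M (itinerary q (Suc n))" "simple_function M (itinerary r (Suc n))"
    using q r simple_function_comp[OF measurable_funpow q] simple_function_comp[OF measurable_funpow r]
    by (simp_all add: simple_function_itinerary)
  have "cond_dentropy (itinerary q (Suc n)) (itinerary r (Suc n))
      = cond_dentropy (\<lambda>w. (?B w, ?A w)) (\<lambda>w. (?D w, ?C w))"
    by (rule cond_dentropy_eq_if_mutually_determined[where \<phi>="\<lambda>xs. (last xs, butlast xs)"
          and \<phi>'="\<lambda>(b, a). a @ [b]" and \<psi>="\<lambda>xs. (last xs, butlast xs)" and \<psi>'="\<lambda>(b, a). a @ [b]"])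
       (use s in \<open>auto simp: itinerary_Suc intro: simple_function_Pair\<close>)
  also have "\<dots> \<le> cond_dentropy ?B ?D + cond_dentropy ?A ?C"
    by (rule cond_dentropy_Pair_Pair_le) (use s in auto)
  also have "\<dots> \<le> cond_dentropy q r + real n * cond_dentropy q r"
    using Suc cond_dentropy_comp_funpow[OF q r] by simp
  finally show ?case by (simp add: algebra_simps)
qed

lemma entropy_rate_le_cond:
  assumes q: "simple_function M q" and r: "simple_function M r"
  shows "entropy_rate q \<le> entropy_rate r + cond_dentropy q r"
proof -
  have "entropy_rate q - cond_dentropy q r \<le> (\<Sum>k<n. entropy_increment r k) / n" if n: "n \<ge> 1" for n
  proof -
    have "(\<Sum>k<n. entropy_rate q) \<le> (\<Sum>k<n. entropy_increment q k)"
      by (intro sum_mono entropy_increment_tendsto(3)[OF q])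
    also have "\<dots> \<le> dentropy (itinerary r n) + cond_dentropy (itinerary q n) (itinerary r n)"
      unfolding dentropy_itinerary_eq_sum[symmetric]
      by (intro dentropy_le_add_cond simple_function_itinerary q r)
    also have "\<dots> \<le> (\<Sum>k<n. entropy_increment r k) + real n * cond_dentropy q r"
      using cond_dentropy_itinerary_le[OF q r] by (simp add: dentropy_itinerary_eq_sum)
    finally have "(entropy_rate q - cond_dentropy q r) * n \<le> (\<Sum>k<n. entropy_increment r k)"
      by (simp add: algebra_simps)
    then show ?thesis using n by (subst pos_le_divide_eq) auto
  qed
  then have "entropy_rate q - cond_dentropy q r \<le> entropy_rate r"
    by (rule le_limit_of_le_averages[OF entropy_increment_tendsto(2,1)[OF r]])
  then show ?thesis by simp
qed

lemma itinerary_itinerary: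
  assumes "1 \<le> k"
  shows "itinerary (itinerary p k) m w = map (\<lambda>j. take k (drop j (itinerary p (m + k - 1) w))) [0..<m]"
  using assms by (intro nth_equalityI) (auto simp: nth_itinerary funpow_apply_funpow add.commute intro!: nth_equalityI)

lemma itinerary_eq_heads_itinerary:
  assumes "1 \<le> k" "1 \<le> m"
  shows "itinerary p (m + k - 1) w
    = map hd (itinerary (itinerary p k) m w) @ tl (last (itinerary (itinerary p k) m w))"
proof (rule nth_equalityI)
  have "itinerary (itinerary p k) m w \<noteq> []" using assms by (auto simp flip: length_0_conv)
  then have last: "last (itinerary (itinerary p k) m w) = itinerary p k ((T ^^ (m - 1)) w)"
    using assms by (simp add: last_conv_nth nth_itinerary)
  then show "length (itinerary p (m + k - 1) w)
      = length (map hd (itinerary (itinerary p k) m w) @ tl (last (itinerary (itinerary p k) m w)))"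
    using assms by simp
  fix i assume i: "i < length (itinerary p (m + k - 1) w)"
  show "itinerary p (m + k - 1) w ! i
      = (map hd (itinerary (itinerary p k) m w) @ tl (last (itinerary (itinerary p k) m w))) ! i"
  proof (cases "i < m")
    case True
    obtain k' where "k = Suc k'" using assms by (cases k) auto
    then show ?thesis using True i by (simp add: nth_append nth_itinerary itinerary_Suc')
  next
    case False
    then obtain i' where "i = Suc i'" using assms by (cases i) auto
    then show ?thesis
      using False i assms by (simp add: last nth_append nth_tl nth_itinerary funpow_apply_funpow)
  qed
qed

lemma entropy_rate_itinerary:
  assumes p: "simple_function M p" and k: "1 \<le> k"
  shows "entropy_rate (itinerary p k) = entropy_rate p"
proof -
  have dentropy_eq: "dentropy (itinerary (itinerary p k) m) = dentropy (itinerary p (m + k - 1))"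
    if "1 \<le> m" for m
    by (rule dentropy_eq_if_mutually_determined[where \<phi>="\<lambda>xs. map (\<lambda>j. take k (drop j xs)) [0..<m]"
        and \<psi>="\<lambda>xss. map hd xss @ tl (last xss)"])
      ((rule simple_function_itinerary p)+, rule itinerary_itinerary[OF k],
        rule itinerary_eq_heads_itinerary[OF k that])
  have "entropy_increment (itinerary p k) (m + 1) = entropy_increment p (m + k)" for m
    using dentropy_eq[of "Suc (m + 1)"] dentropy_eq[of "m + 1"] k by (simp add: entropy_increment_def)
  then have "(\<lambda>m. entropy_increment (itinerary p k) (m + 1)) \<longlonglongrightarrow> entropy_rate p"
    using LIMSEQ_ignore_initial_segment[OF entropy_increment_tendsto(1)[OF p], of k] by simp
  then have "entropy_increment (itinerary p k) \<longlonglongrightarrow> entropy_rate p" by (rule LIMSEQ_offset)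
  then show ?thesis
    using entropy_increment_tendsto(1)[OF simple_function_itinerary[OF p]] LIMSEQ_unique by blast
qed

end

section \<open>Finite partitions and cylinders\<close>

abbreviation words :: "'b set \<Rightarrow> nat \<Rightarrow> 'b list set" where
  "words A n \<equiv> {xs. set xs \<subseteq> A \<and> length xs = n}"

lemma finite_words: "finite A \<Longrightarrow> finite (words A n)"
  by (rule finite_lists_length_eq)

lemma words_Suc: "words A (Suc n) = (\<lambda>(xs, a). xs @ [a]) ` (words A n \<times> A)"
proof (intro equalityI subsetI)
  fix ys assume ys: "ys \<in> words A (Suc n)"
  then have "ys = butlast ys @ [last ys]" "butlast ys \<in> words A n" "last ys \<in> A"
    by (auto simp flip: length_0_conv dest: in_set_butlastD)
  then show "ys \<in> (\<lambda>(xs, a). xs @ [a]) ` (words A n \<times> A)" by force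
qed auto

lemma sum_words_Suc: "(\<Sum>ys\<in>words A (Suc n). f ys) = (\<Sum>xs\<in>words A n. \<Sum>a\<in>A. f (xs @ [a]))"
proof -
  have "inj_on (\<lambda>(xs, a). xs @ [a]) (words A n \<times> A)" by (auto simp: inj_on_def)
  then show ?thesis
    by (simp add: words_Suc sum.reindex sum.cartesian_product[symmetric] comp_def prod.case_distrib)
qed

text \<open>A partition enters the entropy calculus as the random variable \<open>cell Q\<close>; its itineraries
  of length \<open>n\<close> label the cells of \<open>Q_n\<close>.\<close>

definition cell :: "'a set set \<Rightarrow> 'a \<Rightarrow> 'a set" where
  "cell Q w = (THE A. A \<in> Q \<and> w \<in> A)"

context
  fixes M :: "'a measure" and Q :: "'a set set"
  assumes Q: "finite_partition M Q"
begin

lemma finite_partition_eq: "A \<in> Q \<Longrightarrow> B \<in> Q \<Longrightarrow> w \<in> A \<Longrightarrow> w \<in> B \<Longrightarrow> A = B"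
  using Q unfolding finite_partition_def by (metis disjoint_iff)

lemma Union_finite_partition: "\<Union>Q = space M"
  using Q by (simp add: finite_partition_def)

lemma finite_partition_cover: "w \<in> space M \<Longrightarrow> \<exists>A\<in>Q. w \<in> A"
  using Union_finite_partition by auto

lemma finite_partition_subset_space: "A \<in> Q \<Longrightarrow> A \<subseteq> space M"
  using Union_finite_partition by auto

lemma finite_partition_sets: "A \<in> Q \<Longrightarrow> A \<in> sets M"
  using Q by (auto simp: finite_partition_def)

lemma finite_partition_finite: "finite Q"
  using Q by (simp add: finite_partition_def)

lemma cell_in: "w \<in> space M \<Longrightarrow> cell Q w \<in> Q"
  and mem_cell: "w \<in> space M \<Longrightarrow> w \<in> cell Q w"
proof -
  assume "w \<in> space M"
  then have "\<exists>!A. A \<in> Q \<and> w \<in> A" using finite_partition_cover finite_partition_eq by blast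
  then have "cell Q w \<in> Q \<and> w \<in> cell Q w" unfolding cell_def by (rule theI')
  then show "cell Q w \<in> Q" "w \<in> cell Q w" by auto
qed

lemma cell_eq_iff: "w \<in> space M \<Longrightarrow> A \<in> Q \<Longrightarrow> cell Q w = A \<longleftrightarrow> w \<in> A"
  by (metis cell_in mem_cell finite_partition_eq)

lemma simple_function_cell: "simple_function M (cell Q)"
  unfolding simple_function_def
proof
  have "cell Q ` space M \<subseteq> Q" using cell_in by auto
  then show "finite (cell Q ` space M)" using finite_partition_finite finite_subset by auto
  have "cell Q -` {A} \<inter> space M = A" if "A \<in> Q" for A
    using cell_eq_iff[OF _ that] finite_partition_subset_space[OF that] by auto
  then show "\<forall>x\<in>cell Q ` space M. cell Q -` {x} \<inter> space M \<in> sets M"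
    using cell_in finite_partition_sets by auto
qed

end

context mpt
begin

definition cylinder :: "'a set list \<Rightarrow> 'a set" where
  "cylinder xs = space M \<inter> (\<Inter>k<length xs. (T ^^ k) -` (xs ! k))"

lemma refine_eq_cylinders: "refine M T Q n = cylinder ` words Q n"
proof (intro equalityI subsetI)
  fix A assume "A \<in> refine M T Q n"
  then obtain a where A: "A = space M \<inter> (\<Inter>k<n. (T ^^ k) -` (a k))" and a: "\<forall>k<n. a k \<in> Q"
    by (auto simp: refine_def)
  then have "A = cylinder (map a [0..<n])" "map a [0..<n] \<in> words Q n"
    by (auto simp: cylinder_def)
  then show "A \<in> cylinder ` words Q n" by blast
next
  fix A assume "A \<in> cylinder ` words Q n"
  then obtain xs where "A = cylinder xs" "xs \<in> words Q n" by auto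
  then show "A \<in> refine M T Q n" unfolding refine_def cylinder_def by force
qed

lemma cylinder_Nil: "cylinder [] = space M"
  by (simp add: cylinder_def)

lemma cylinder_snoc: "cylinder (xs @ [A]) = cylinder xs \<inter> (T ^^ length xs) -` A"
  by (auto simp: cylinder_def nth_append lessThan_Suc)

lemma cylinder_subset_last:
  "xs \<noteq> [] \<Longrightarrow> cylinder xs \<subseteq> (T ^^ (length xs - 1)) -` last xs \<inter> space M"
  by (auto simp: cylinder_def last_conv_nth)

lemma sets_cylinder:
  assumes Q: "finite_partition M Q"
  shows "set xs \<subseteq> Q \<Longrightarrow> cylinder xs \<in> sets M"
proof (induction xs rule: rev_induct)
  case (snoc A xs)
  have "cylinder (xs @ [A]) = cylinder xs \<inter> ((T ^^ length xs) -` A \<inter> space M)"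
    by (auto simp: cylinder_snoc cylinder_def[of xs])
  also have "\<dots> \<in> sets M"
    using snoc measurable_sets[OF measurable_funpow finite_partition_sets[OF Q]] by auto
  finally show ?case .
qed (simp add: cylinder_Nil)

lemma cylinders_disjoint:
  assumes Q: "finite_partition M Q" and xs: "xs \<in> words Q n" and ys: "ys \<in> words Q n"
    and "xs \<noteq> ys"
  shows "cylinder xs \<inter> cylinder ys = {}"
proof (rule ccontr)
  assume "cylinder xs \<inter> cylinder ys \<noteq> {}"
  then obtain w where w: "w \<in> cylinder xs" "w \<in> cylinder ys" by blast
  have "xs ! k = ys ! k" if "k < n" for k
    using w that xs ys by (intro finite_partition_eq[OF Q, of _ _ "(T ^^ k) w"]) (auto simp: cylinder_def)
  then show False using assms xs ys by (auto intro: nth_equalityI)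
qed

lemma pmass_itinerary_cell:
  assumes Q: "finite_partition M Q" and xs: "xs \<in> words Q n"
  shows "pmass (itinerary (cell Q) n) xs = prob (cylinder xs)"
proof -
  have "itinerary (cell Q) n w = xs \<longleftrightarrow> (\<forall>k<n. (T ^^ k) w \<in> xs ! k)" if w: "w \<in> space M" for w
  proof -
    have "cell Q ((T ^^ k) w) = xs ! k \<longleftrightarrow> (T ^^ k) w \<in> xs ! k" if "k < n" for k
      using xs that by (intro cell_eq_iff[OF Q funpow_in_space[OF w]]) auto
    then show ?thesis using xs by (auto simp: list_eq_iff_nth_eq nth_itinerary)
  qed
  then have "itinerary (cell Q) n -` {xs} \<inter> space M = cylinder xs"
    using xs by (auto simp: cylinder_def)
  then show ?thesis by (simp add: pmass_def)
qed

lemma part_entropy_refine_eq_sum: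
  assumes Q: "finite_partition M Q"
  shows "part_entropy M (refine M T Q n) = - (\<Sum>xs\<in>words Q n. xlnx (prob (cylinder xs)))"
proof -
  have "(\<Sum>A\<in>cylinder ` words Q n. xlnx (prob A)) = (\<Sum>xs\<in>words Q n. xlnx (prob (cylinder xs)))"
  proof (rule sum.reindex_nontrivial[OF finite_words[OF finite_partition_finite[OF Q]], unfolded comp_def])
    fix xs ys assume "xs \<in> words Q n" "ys \<in> words Q n" "xs \<noteq> ys" "cylinder xs = cylinder ys"
    then have "cylinder xs = {}" using cylinders_disjoint[OF Q, of xs n ys] by auto
    then show "xlnx (prob (cylinder xs)) = 0" by simp
  qed
  then show ?thesis by (simp add: part_entropy_def refine_eq_cylinders xlnx_def)
qed

lemma part_entropy_refine:
  assumes Q: "finite_partition M Q"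
  shows "part_entropy M (refine M T Q n) = dentropy (itinerary (cell Q) n)"
proof -
  have "part_entropy M (refine M T Q n) = - (\<Sum>xs\<in>words Q n. xlnx (pmass (itinerary (cell Q) n) xs))"
    unfolding part_entropy_refine_eq_sum[OF Q]
    using pmass_itinerary_cell[OF Q] by (intro arg_cong[where f=uminus] sum.cong) auto
  also have "\<dots> = dentropy (itinerary (cell Q) n)"
    using cell_in[OF Q] funpow_in_space finite_words[OF finite_partition_finite[OF Q]]
    by (intro dentropy_eq_sum_superset[symmetric]) (auto simp: itinerary_def)
  finally show ?thesis .
qed

lemma part_KS_eq_entropy_rate:
  "finite_partition M Q \<Longrightarrow> part_KS M T Q = entropy_rate (cell Q)"
  by (simp add: part_KS_def entropy_rate_def entropy_increment_def[abs_def] part_entropy_refine)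

section \<open>Generating partitions\<close>

lemma vimage_itinerary_take:
  "k \<le> K \<Longrightarrow> itinerary g k -` S \<inter> space M = itinerary g K -` {xs. take k xs \<in> S} \<inter> space M"
  by (auto simp: take_itinerary)

definition approximable :: "'a set set \<Rightarrow> 'a set \<Rightarrow> bool" where
  "approximable P A \<longleftrightarrow> A \<in> sets M \<and>
     (\<forall>\<delta>>0. \<exists>k S. prob (sym_diff A (itinerary (cell P) k -` S \<inter> space M)) < \<delta>)"

context
  fixes P :: "'a set set"
  assumes P: "finite_partition M P"
begin

lemma sets_vimage_itinerary_cell: "itinerary (cell P) k -` S \<inter> space M \<in> sets M"
  by (rule simple_functionD(2)[OF simple_function_itinerary[OF simple_function_cell[OF P]]])

lemma approximable_vimage_funpow:
  assumes C: "C \<in> P"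
  shows "approximable P ((T ^^ n) -` C \<inter> space M)"
proof -
  have "(T ^^ n) -` C \<inter> space M = itinerary (cell P) (Suc n) -` {xs. xs ! n = C} \<inter> space M"
    using cell_eq_iff[OF P funpow_in_space C] by (auto simp: nth_itinerary)
  then show ?thesis
    unfolding approximable_def using measurable_sets[OF measurable_funpow finite_partition_sets[OF P C]]
    by (metis Diff_cancel Un_absorb measure_empty)
qed

lemma approximable_Compl:
  assumes A: "approximable P A"
  shows "approximable P (space M - A)"
proof -
  have "sym_diff (space M - A) (itinerary (cell P) k -` (- S) \<inter> space M)
      = sym_diff A (itinerary (cell P) k -` S \<inter> space M)" for k S
    using sets.sets_into_space A by (auto simp: approximable_def)
  then show ?thesis using A unfolding approximable_def by (metis sets.compl_sets)
qed

lemma approximable_empty: "approximable P {}"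
proof -
  have "sym_diff {} (itinerary (cell P) 0 -` {} \<inter> space M) = {}" by simp
  then show ?thesis unfolding approximable_def by (metis measure_empty sets.empty_sets)
qed

lemma approximable_Un:
  assumes A: "approximable P A" and B: "approximable P B"
  shows "approximable P (A \<union> B)"
proof -
  have "\<exists>k S. prob (sym_diff (A \<union> B) (itinerary (cell P) k -` S \<inter> space M)) < \<delta>" if "\<delta> > 0" for \<delta>
  proof -
    obtain k1 S1 k2 S2
      where 1: "prob (sym_diff A (itinerary (cell P) k1 -` S1 \<inter> space M)) < \<delta> / 2"
        and 2: "prob (sym_diff B (itinerary (cell P) k2 -` S2 \<inter> space M)) < \<delta> / 2"
      using A B \<open>\<delta> > 0\<close> unfolding approximable_def by (meson half_gt_zero)
    let ?E1 = "itinerary (cell P) k1 -` S1 \<inter> space M" and ?E2 = "itinerary (cell P) k2 -` S2 \<inter> space M"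
    let ?S = "{xs. take k1 xs \<in> S1} \<union> {xs. take k2 xs \<in> S2}"
    have E: "itinerary (cell P) (max k1 k2) -` ?S \<inter> space M = ?E1 \<union> ?E2"
      by (auto simp: take_itinerary)
    have "prob (sym_diff (A \<union> B) (?E1 \<union> ?E2)) \<le> prob (sym_diff A ?E1 \<union> sym_diff B ?E2)"
      using A B sets_vimage_itinerary_cell by (intro finite_measure_mono) (auto simp: approximable_def)
    also have "\<dots> \<le> prob (sym_diff A ?E1) + prob (sym_diff B ?E2)"
      using A B sets_vimage_itinerary_cell by (intro measure_Un_le) (auto simp: approximable_def)
    finally have "prob (sym_diff (A \<union> B) (?E1 \<union> ?E2)) < \<delta>" using 1 2 by linarith
    then show ?thesis unfolding E[symmetric] by blast
  qed
  then show ?thesis using A B by (auto simp: approximable_def)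
qed

lemma approximable_UN_lessThan:
  fixes a :: "nat \<Rightarrow> 'a set"
  shows "(\<And>i. approximable P (a i)) \<Longrightarrow> approximable P (\<Union>i<N. a i)"
proof (induction N)
  case 0
  then show ?case by (simp add: approximable_empty)
next
  case (Suc N)
  then show ?case by (simp add: lessThan_Suc approximable_Un Un_commute)
qed

lemma approximable_UN:
  fixes a :: "nat \<Rightarrow> 'a set"
  assumes a: "\<And>i. approximable P (a i)"
  shows "approximable P (\<Union>i. a i)"
proof -
  have as: "a i \<in> sets M" for i using a by (simp add: approximable_def)
  have "\<exists>k S. prob (sym_diff (\<Union>i. a i) (itinerary (cell P) k -` S \<inter> space M)) < \<delta>" if "\<delta> > 0" for \<delta>
  proof -
    have "(\<lambda>N. prob (\<Union>i<N. a i)) \<longlonglongrightarrow> prob (\<Union>N. \<Union>i<N. a i)"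
      using as by (intro finite_Lim_measure_incseq) (auto simp: incseq_def, force)
    moreover have "(\<Union>N. \<Union>i<N. a i) = (\<Union>i. a i)" by blast
    ultimately obtain N where N: "norm (prob (\<Union>i<N. a i) - prob (\<Union>i. a i)) < \<delta> / 2"
      using LIMSEQ_D[of _ "prob (\<Union>i. a i)" "\<delta> / 2"] \<open>\<delta> > 0\<close> by fastforce
    have "prob ((\<Union>i. a i) - (\<Union>i<N. a i)) = prob (\<Union>i. a i) - prob (\<Union>i<N. a i)"
      using as by (intro finite_measure_Diff) auto
    moreover have "sym_diff (\<Union>i. a i) (\<Union>i<N. a i) = (\<Union>i. a i) - (\<Union>i<N. a i)" by blast
    ultimately have "prob (sym_diff (\<Union>i. a i) (\<Union>i<N. a i)) = prob (\<Union>i. a i) - prob (\<Union>i<N. a i)"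
      by simp
    then have 1: "prob (sym_diff (\<Union>i. a i) (\<Union>i<N. a i)) < \<delta> / 2" using N unfolding real_norm_def abs_less_iff by linarith
    obtain k S where 2: "prob (sym_diff (\<Union>i<N. a i) (itinerary (cell P) k -` S \<inter> space M)) < \<delta> / 2"
      using approximable_UN_lessThan[OF a] \<open>\<delta> > 0\<close> unfolding approximable_def by (meson half_gt_zero)
    have "prob (sym_diff (\<Union>i. a i) (itinerary (cell P) k -` S \<inter> space M))
        \<le> prob (sym_diff (\<Union>i. a i) (\<Union>i<N. a i))
          + prob (sym_diff (\<Union>i<N. a i) (itinerary (cell P) k -` S \<inter> space M))"
      using as sets_vimage_itinerary_cell by (intro prob_sym_diff_le) auto
    then show ?thesis using 1 2 by (intro exI[of _ k] exI[of _ S]) linarith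
  qed
  then show ?thesis using as by (auto simp: approximable_def)
qed

lemma approximable_generated:
  "A \<in> sigma_sets (space M) {(T ^^ n) -` C \<inter> space M | n C. C \<in> P} \<Longrightarrow> approximable P A"
proof (induction rule: sigma_sets.induct)
  case (Basic a)
  then show ?case using approximable_vimage_funpow by blast
next
  case Empty
  show ?case by (rule approximable_empty)
next
  case (Compl a)
  show ?case by (rule approximable_Compl[OF Compl.IH])
next
  case (Union a)
  show ?case by (rule approximable_UN[OF Union.IH])
qed

lemma generating_approximable:
  assumes gen: "generating M T P" and B: "B \<in> sets M"
  shows "approximable P B"
proof -
  obtain A where A: "A \<in> sigma_sets (space M) {(T ^^ n) -` C \<inter> space M | n C. C \<in> P}"
    and AB: "prob (sym_diff A B) = 0"
    using gen B unfolding generating_def by blast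
  have A: "approximable P A" by (rule approximable_generated[OF A])
  have "\<exists>k S. prob (sym_diff B (itinerary (cell P) k -` S \<inter> space M)) < \<delta>" if "\<delta> > 0" for \<delta>
  proof -
    obtain k S where "prob (sym_diff A (itinerary (cell P) k -` S \<inter> space M)) < \<delta>"
      using A \<open>\<delta> > 0\<close> unfolding approximable_def by blast
    moreover have "prob (sym_diff B (itinerary (cell P) k -` S \<inter> space M))
        \<le> prob (sym_diff B A) + prob (sym_diff A (itinerary (cell P) k -` S \<inter> space M))"
      using A B sets_vimage_itinerary_cell by (intro prob_sym_diff_le) (auto simp: approximable_def)
    moreover have "sym_diff B A = sym_diff A B" by blast
    ultimately show ?thesis using AB by (intro exI[of _ k] exI[of _ S]) simp
  qed
  then show ?thesis using B by (simp add: approximable_def)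
qed

end

context
  fixes P Q :: "'a set set"
  assumes P: "finite_partition M P" and gen: "generating M T P" and Q: "finite_partition M Q"
begin

lemma cell_approx_by_itinerary:
  assumes "\<delta> > 0"
  shows "\<exists>K\<ge>1. \<exists>\<psi>. range \<psi> \<subseteq> Q \<and> prob {w\<in>space M. cell Q w \<noteq> \<psi> (itinerary (cell P) K w)} \<le> \<delta>"
proof -
  have finQ: "finite Q" by (rule finite_partition_finite[OF Q])
  obtain B0 where B0: "B0 \<in> Q" using cell_in[OF Q] not_empty by blast
  then have cQ: "card Q > 0" using finQ card_gt_0_iff by blast
  have "\<forall>B\<in>Q. \<exists>k S. prob (sym_diff B (itinerary (cell P) k -` S \<inter> space M)) < \<delta> / card Q"
    using generating_approximable[OF P gen finite_partition_sets[OF Q]] \<open>\<delta> > 0\<close> cQ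
    unfolding approximable_def by simp
  then obtain k S where kS: "\<And>B. B \<in> Q \<Longrightarrow>
      prob (sym_diff B (itinerary (cell P) (k B) -` S B \<inter> space M)) < \<delta> / card Q"
    by metis
  define K where "K = Suc (\<Sum>B\<in>Q. k B)"
  have kK: "k B \<le> K" if "B \<in> Q" for B
    using member_le_sum[of B Q k] finQ that by (simp add: K_def)
  define S' where "S' B = {xs. take (k B) xs \<in> S B}" for B
  define E where "E B = itinerary (cell P) K -` S' B \<inter> space M" for B
  have E: "E B = itinerary (cell P) (k B) -` S B \<inter> space M" if "B \<in> Q" for B
    unfolding E_def S'_def by (rule vimage_itinerary_take[OF kK[OF that], symmetric])
  define \<psi> where "\<psi> xs = (if \<exists>B\<in>Q. xs \<in> S' B then SOME B. B \<in> Q \<and> xs \<in> S' B else B0)" for xs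
  have \<psi>: "\<psi> xs \<in> Q \<and> (\<psi> xs = B0 \<or> xs \<in> S' (\<psi> xs))" for xs
    unfolding \<psi>_def using B0 by (auto intro: someI2_ex)
  have bad: "{w\<in>space M. cell Q w \<noteq> \<psi> (itinerary (cell P) K w)} \<subseteq> (\<Union>B\<in>Q. sym_diff B (E B))"
  proof
    fix w assume "w \<in> {w\<in>space M. cell Q w \<noteq> \<psi> (itinerary (cell P) K w)}"
    then have w: "w \<in> space M" and ne: "cell Q w \<noteq> \<psi> (itinerary (cell P) K w)" by auto
    show "w \<in> (\<Union>B\<in>Q. sym_diff B (E B))"
    proof (cases "\<exists>B\<in>Q. itinerary (cell P) K w \<in> S' B")
      case True
      then have "itinerary (cell P) K w \<in> S' (\<psi> (itinerary (cell P) K w))"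
        unfolding \<psi>_def by (auto intro: someI2_ex)
      moreover have "w \<notin> \<psi> (itinerary (cell P) K w)"
        using ne cell_eq_iff[OF Q w] \<psi> by blast
      ultimately show ?thesis using \<psi> w by (auto simp: E_def)
    next
      case False
      then show ?thesis using cell_in[OF Q w] mem_cell[OF Q w] by (auto simp: E_def)
    qed
  qed
  have sets: "sym_diff B (E B) \<in> sets M" if "B \<in> Q" for B
    using finite_partition_sets[OF Q that] sets_vimage_itinerary_cell[OF P] by (auto simp: E_def)
  have "prob {w\<in>space M. cell Q w \<noteq> \<psi> (itinerary (cell P) K w)} \<le> (\<Sum>B\<in>Q. prob (sym_diff B (E B)))"
    using finite_measure_mono[OF bad] measure_UNION_le[OF finQ sets] finQ sets by force
  also have "\<dots> \<le> (\<Sum>B\<in>Q. \<delta> / card Q)"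
    using kS E by (intro sum_mono) (simp add: less_imp_le)
  also have "\<dots> = \<delta>" using cQ by simp
  finally show ?thesis using \<psi> by (intro exI[of _ K] exI[of _ \<psi>]) (auto simp: K_def)
qed

lemma cond_dentropy_cell_itinerary_le:
  assumes "\<epsilon> > 0"
  shows "\<exists>k\<ge>1. cond_dentropy (cell Q) (itinerary (cell P) k) \<le> \<epsilon>"
proof -
  let ?c = "real (card Q)"
  obtain B0 where "B0 \<in> Q" using cell_in[OF Q] not_empty by blast
  then have c: "?c \<ge> 1" using finite_partition_finite[OF Q] by (auto simp: Suc_le_eq card_gt_0_iff)
  define e where "e = min 1 ((\<epsilon> / (2 * ?c ^ 2)) ^ 2)"
  have "e > 0" using \<open>\<epsilon> > 0\<close> c by (simp add: e_def)
  then obtain K \<psi> where K: "K \<ge> 1" and \<psi>: "range \<psi> \<subseteq> Q"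
    and bad: "prob {w\<in>space M. cell Q w \<noteq> \<psi> (itinerary (cell P) K w)} \<le> e"
    using cell_approx_by_itinerary by blast
  have sP: "simple_function M (itinerary (cell P) K)"
    by (rule simple_function_itinerary[OF simple_function_cell[OF P]])
  have "cond_dentropy (cell Q) (itinerary (cell P) K)
      \<le> cond_dentropy (cell Q) (\<lambda>w. \<psi> (itinerary (cell P) K w))"
    by (rule cond_dentropy_le_comp[OF simple_function_cell[OF Q] sP])
  also have "\<dots> \<le> ?c ^ 2 * (2 * sqrt e)"
    by (rule cond_dentropy_le_of_prob_neq[OF simple_function_cell[OF Q] simple_function_compose1[OF sP]
          _ _ finite_partition_finite[OF Q] bad]) (use cell_in[OF Q] \<psi> in \<open>auto simp: e_def\<close>)
  also have "\<dots> \<le> ?c ^ 2 * (2 * (\<epsilon> / (2 * ?c ^ 2)))"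
  proof -
    have "sqrt e \<le> sqrt ((\<epsilon> / (2 * ?c ^ 2)) ^ 2)"
      unfolding e_def by (simp del: real_sqrt_abs)
    also have "\<dots> = \<epsilon> / (2 * ?c ^ 2)"
      using \<open>\<epsilon> > 0\<close> by simp
    finally show ?thesis by (intro mult_left_mono) auto
  qed
  also have "\<dots> = \<epsilon>" using c by (simp add: field_simps)
  finally show ?thesis using K by blast
qed

lemma part_KS_le_generating: "part_KS M T Q \<le> part_KS M T P"
proof (rule field_le_epsilon)
  fix \<epsilon> :: real assume "0 < \<epsilon>"
  then obtain k where k: "1 \<le> k" and cond: "cond_dentropy (cell Q) (itinerary (cell P) k) \<le> \<epsilon>"
    using cond_dentropy_cell_itinerary_le by blast
  have "entropy_rate (cell Q) \<le> entropy_rate (itinerary (cell P) k) + \<epsilon>"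
    using entropy_rate_le_cond[OF simple_function_cell[OF Q]
        simple_function_itinerary[OF simple_function_cell[OF P], of k]] cond
    by linarith
  then show "part_KS M T Q \<le> part_KS M T P + \<epsilon>"
    by (simp add: part_KS_eq_entropy_rate[OF P] part_KS_eq_entropy_rate[OF Q]
        entropy_rate_itinerary[OF simple_function_cell[OF P] k])
qed

end

lemma KS_entropy_eq_part_KS_generating:
  assumes P: "finite_partition M P" and gen: "generating M T P"
  shows "KS_entropy M T = ereal (part_KS M T P)"
  unfolding KS_entropy_def
proof (rule antisym)
  show "(SUP Q\<in>{Q. finite_partition M Q}. ereal (part_KS M T Q)) \<le> ereal (part_KS M T P)"
    using part_KS_le_generating[OF P gen] by (auto intro: SUP_least)
  show "ereal (part_KS M T P) \<le> (SUP Q\<in>{Q. finite_partition M Q}. ereal (part_KS M T Q))"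
    using P by (auto intro: SUP_upper)
qed

section \<open>Markov partitions\<close>

definition trans_prob :: "'a set \<Rightarrow> 'a set \<Rightarrow> real" where
  "trans_prob A B = prob (A \<inter> T -` B \<inter> space M) / prob A"

definition trans_entropy :: "'a set set \<Rightarrow> 'a set \<Rightarrow> real" where
  "trans_entropy Q A = - (\<Sum>B\<in>Q. xlnx (trans_prob A B))"

lemma trans_prob_nonneg: "0 \<le> trans_prob A B"
  by (simp add: trans_prob_def)

context
  fixes Q :: "'a set set"
  assumes Q: "finite_partition M Q"
begin

lemma sum_prob_Int_vimage_funpow:
  assumes E: "E \<in> sets M"
  shows "(\<Sum>A\<in>Q. prob (E \<inter> (T ^^ n) -` A)) = prob E"
proof -
  have sets: "E \<inter> (T ^^ n) -` A \<in> sets M" if "A \<in> Q" for A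
  proof -
    have "E \<inter> (T ^^ n) -` A = E \<inter> ((T ^^ n) -` A \<inter> space M)" using sets.sets_into_space[OF E] by auto
    then show ?thesis
      using measurable_sets[OF measurable_funpow finite_partition_sets[OF Q that]] E by auto
  qed
  have "E = (\<Union>A\<in>Q. E \<inter> (T ^^ n) -` A)"
  proof (intro equalityI subsetI)
    fix w assume "w \<in> E"
    then show "w \<in> (\<Union>A\<in>Q. E \<inter> (T ^^ n) -` A)"
      using finite_partition_cover[OF Q funpow_in_space] sets.sets_into_space[OF E] by blast
  qed auto
  also have "prob \<dots> = (\<Sum>A\<in>Q. prob (E \<inter> (T ^^ n) -` A))"
  proof (intro measure_finite_Union)
    show "disjoint_family_on (\<lambda>A. E \<inter> (T ^^ n) -` A) Q"
      unfolding disjoint_family_on_def using finite_partition_eq[OF Q] by blast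
  qed (use sets finite_partition_finite[OF Q] in auto)
  finally show ?thesis by simp
qed

lemma sum_prob_cylinder_Int:
  assumes B: "B \<in> sets M"
  shows "(\<Sum>xs\<in>words Q n. prob (cylinder xs \<inter> B)) = prob B"
proof (induction n)
  case 0
  have "words Q 0 = {[]}" by auto
  then show ?case using sets.sets_into_space[OF B] by (simp add: cylinder_Nil Int_absorb1)
next
  case (Suc n)
  have "(\<Sum>A\<in>Q. prob (cylinder (xs @ [A]) \<inter> B)) = prob (cylinder xs \<inter> B)" if "xs \<in> words Q n" for xs
  proof -
    have "(\<Sum>A\<in>Q. prob (cylinder (xs @ [A]) \<inter> B)) = (\<Sum>A\<in>Q. prob ((cylinder xs \<inter> B) \<inter> (T ^^ n) -` A))"
      using that by (intro sum.cong) (auto simp: cylinder_snoc Int_ac)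
    also have "\<dots> = prob (cylinder xs \<inter> B)"
      using sets_cylinder[OF Q] that B by (intro sum_prob_Int_vimage_funpow) auto
    finally show ?thesis .
  qed
  then show ?case using Suc by (simp add: sum_words_Suc)
qed

lemma sum_prob_cylinder_mult_last:
  assumes "n \<ge> 1"
  shows "(\<Sum>xs\<in>words Q n. prob (cylinder xs) * f (last xs)) = (\<Sum>A\<in>Q. prob A * f A)"
proof -
  define V where "V A = (T ^^ (n - 1)) -` A \<inter> space M" for A
  have V: "V A \<in> sets M" if "A \<in> Q" for A
    unfolding V_def by (rule measurable_sets[OF measurable_funpow finite_partition_sets[OF Q that]])
  have "prob (cylinder xs) * f (last xs) = (\<Sum>A\<in>Q. prob (cylinder xs \<inter> V A) * f A)"
    if xs: "xs \<in> words Q n" for xs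
  proof -
    have ne: "xs \<noteq> []" using xs assms by auto
    then have last: "last xs \<in> Q" using xs by auto
    have sub: "cylinder xs \<subseteq> V (last xs)" using cylinder_subset_last[OF ne] xs by (simp add: V_def)
    have "cylinder xs \<inter> V A = {}" if "A \<in> Q" "A \<noteq> last xs" for A
      using sub finite_partition_eq[OF Q that(1) last] that(2) by (auto simp: V_def)
    then have "(\<Sum>A\<in>Q. prob (cylinder xs \<inter> V A) * f A) = prob (cylinder xs \<inter> V (last xs)) * f (last xs)"
      by (intro sum.remove[OF finite_partition_finite[OF Q] last, THEN trans] sum.neutral) auto
    then show ?thesis using sub by (simp add: Int_absorb2)
  qed
  then have "(\<Sum>xs\<in>words Q n. prob (cylinder xs) * f (last xs))
      = (\<Sum>A\<in>Q. (\<Sum>xs\<in>words Q n. prob (cylinder xs \<inter> V A)) * f A)"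
    by (simp add: sum.swap[of _ Q] sum_distrib_right)
  also have "\<dots> = (\<Sum>A\<in>Q. prob A * f A)"
    using sum_prob_cylinder_Int[OF V] measure_funpow_vimage[OF finite_partition_sets[OF Q]]
    by (simp add: V_def)
  finally show ?thesis .
qed

lemma sum_trans_prob:
  assumes A: "A \<in> Q" and "prob A \<noteq> 0"
  shows "(\<Sum>B\<in>Q. trans_prob A B) = 1"
proof -
  have "A \<inter> T -` B \<inter> space M = A \<inter> (T ^^ 1) -` B" for B
    using finite_partition_subset_space[OF Q A] by auto
  then show ?thesis
    using sum_prob_Int_vimage_funpow[OF finite_partition_sets[OF Q A], of 1] assms
    by (simp add: trans_prob_def flip: sum_divide_distrib)
qed

lemma prob_cylinder_snoc_markov:
  assumes mk: "markov_prop M T Q" and n: "n \<ge> 1" and xs: "xs \<in> words Q n" and B: "B \<in> Q"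
  shows "prob (cylinder (xs @ [B])) = prob (cylinder xs) * trans_prob (last xs) B"
proof (cases "prob (cylinder xs) = 0")
  case True
  have "prob (cylinder (xs @ [B])) \<le> prob (cylinder xs)"
    using sets_cylinder[OF Q] xs by (intro finite_measure_mono) (auto simp: cylinder_snoc)
  then show ?thesis using True measure_nonneg[of M "cylinder (xs @ [B])"] by simp
next
  case False
  then have pos: "prob (cylinder xs) > 0" using measure_nonneg[of M "cylinder xs"] by linarith
  define a where "a k = (xs @ [B]) ! k" for k
  have "\<forall>k\<le>n. a k \<in> Q" using xs B by (auto simp: a_def nth_append)
  moreover have c: "space M \<inter> (\<Inter>k<n. (T ^^ k) -` (a k)) = cylinder xs"
    using xs by (auto simp: cylinder_def a_def nth_append)
  ultimately have "prob (space M \<inter> (\<Inter>k\<le>n. (T ^^ k) -` (a k))) / prob (cylinder xs)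
      = prob (a (n - 1) \<inter> T -` (a n) \<inter> space M) / prob (a (n - 1))"
    using mk n pos unfolding markov_prop_def by (metis (no_types, lifting))
  moreover have "space M \<inter> (\<Inter>k\<le>n. (T ^^ k) -` (a k)) = cylinder (xs @ [B])"
    using xs by (auto simp: cylinder_def a_def less_Suc_eq_le)
  moreover have "xs \<noteq> []" using xs n by (auto simp flip: length_0_conv)
  then have "a (n - 1) = last xs" "a n = B"
    using xs by (auto simp: a_def nth_append last_conv_nth)
  ultimately have "prob (cylinder (xs @ [B])) / prob (cylinder xs) = trans_prob (last xs) B"
    by (simp add: trans_prob_def)
  then show ?thesis using False by (simp add: field_simps)
qed

lemma sum_xlnx_prob_cylinder_snoc:
  assumes mk: "markov_prop M T Q" and n: "n \<ge> 1" and xs: "xs \<in> words Q n"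
  shows "(\<Sum>B\<in>Q. xlnx (prob (cylinder (xs @ [B]))))
    = xlnx (prob (cylinder xs)) - prob (cylinder xs) * trans_entropy Q (last xs)"
proof -
  have last: "last xs \<in> Q" using xs n by (auto simp flip: length_0_conv)
  have "(\<Sum>B\<in>Q. xlnx (prob (cylinder (xs @ [B]))))
      = (\<Sum>B\<in>Q. trans_prob (last xs) B * xlnx (prob (cylinder xs))
          + prob (cylinder xs) * xlnx (trans_prob (last xs) B))"
    using prob_cylinder_snoc_markov[OF mk n xs]
    by (intro sum.cong refl) (simp add: xlnx_mult trans_prob_nonneg)
  also have "\<dots> = (\<Sum>B\<in>Q. trans_prob (last xs) B) * xlnx (prob (cylinder xs))
      - prob (cylinder xs) * trans_entropy Q (last xs)"
    by (simp add: sum.distrib sum_distrib_left sum_distrib_right trans_entropy_def)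
  also have "(\<Sum>B\<in>Q. trans_prob (last xs) B) * xlnx (prob (cylinder xs)) = xlnx (prob (cylinder xs))"
  proof (cases "prob (last xs) = 0")
    case True
    have "prob (cylinder xs) \<le> prob ((T ^^ (length xs - 1)) -` last xs \<inter> space M)"
      using xs n cylinder_subset_last[of xs]
      by (intro finite_measure_mono measurable_sets[OF measurable_funpow finite_partition_sets[OF Q last]])
         (auto simp flip: length_0_conv)
    then have "prob (cylinder xs) = 0"
      using True measure_funpow_vimage[OF finite_partition_sets[OF Q last]] measure_nonneg[of M "cylinder xs"]
      by simp
    then show ?thesis by simp
  qed (simp add: sum_trans_prob[OF last])
  finally show ?thesis .
qed

lemma part_entropy_refine_Suc_markov:
  assumes mk: "markov_prop M T Q" and n: "n \<ge> 1"
  shows "part_entropy M (refine M T Q (Suc n))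
    = part_entropy M (refine M T Q n) + (\<Sum>A\<in>Q. prob A * trans_entropy Q A)"
  using sum_xlnx_prob_cylinder_snoc[OF mk n] sum_prob_cylinder_mult_last[OF n]
  by (simp add: part_entropy_refine_eq_sum[OF Q] sum_words_Suc sum_subtractf)

lemma refine_1: "refine M T Q 1 = Q"
proof -
  have "refine M T Q 1 = {space M \<inter> a (0::nat) | a. a 0 \<in> Q}" by (simp add: refine_def lessThan_Suc)
  also have "\<dots> = Q"
    using finite_partition_subset_space[OF Q] by (force simp: Int_absorb1)
  finally show ?thesis .
qed

lemma part_KS_markov:
  assumes mk: "markov_prop M T Q"
  shows "part_KS M T Q = part_entropy M (refine M T Q 2) - part_entropy M Q"
proof -
  define c where "c = (\<Sum>A\<in>Q. prob A * trans_entropy Q A)"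
  have eq: "part_entropy M (refine M T Q (Suc n)) - part_entropy M (refine M T Q n) = c" if "n \<ge> 1" for n
    using part_entropy_refine_Suc_markov[OF mk that] by (simp add: c_def)
  then have "(\<lambda>n. part_entropy M (refine M T Q (Suc n)) - part_entropy M (refine M T Q n)) \<longlonglongrightarrow> c"
    by (intro tendsto_eventually) (auto simp: eventually_sequentially)
  then have "part_KS M T Q = c" unfolding part_KS_def by (rule limI)
  then show ?thesis using eq[of 1] refine_1 by (simp add: numeral_2_eq_2)
qed

end

end

section \<open>Ordinal partitions\<close>

text \<open>Sorting \<open>0, \<dots>, d\<close> increasingly by this key lists the indices by decreasing value, equal
  values by decreasing index, which is the order prescribed by an ordinal pattern.\<close>

definition pattern_key :: "(nat \<Rightarrow> real) \<Rightarrow> nat \<Rightarrow> real list" where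
  "pattern_key x j = [- x j, - real j]"

lemma inj_pattern_key: "inj (pattern_key x)"
  by (auto simp: inj_on_def pattern_key_def)

lemma pattern_key_less_iff: "pattern_key x a < pattern_key x b \<longleftrightarrow> x b < x a \<or> (x a = x b \<and> b < a)"
  by (auto simp: pattern_key_def list_less_def)

lemma has_pattern_imp_sorted:
  assumes "has_pattern x d r"
  shows "sorted (map (pattern_key x) r)" "distinct r" "set r = {0..d}"
proof -
  show "distinct r" and r: "set r = {0..d}" using assms by (auto simp: has_pattern_def ord_patterns_def)
  then have len: "length r = Suc d" using distinct_card by fastforce
  have "pattern_key x (r ! i) < pattern_key x (r ! Suc i)" if "Suc i < length r" for i
  proof -
    have "Suc i \<in> {1..d}" using that len by auto
    then have "x (r ! (Suc i - 1)) \<ge> x (r ! Suc i) \<and>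
        (x (r ! (Suc i - 1)) = x (r ! Suc i) \<longrightarrow> r ! (Suc i - 1) > r ! Suc i)"
      using assms unfolding has_pattern_def by blast
    then show ?thesis unfolding pattern_key_less_iff by auto
  qed
  then show "sorted (map (pattern_key x) r)" by (auto simp: sorted_iff_nth_Suc less_imp_le)
qed

lemma has_pattern_unique:
  assumes "has_pattern x d r" "has_pattern x d r'"
  shows "r = r'"
proof -
  note r = has_pattern_imp_sorted[OF assms(1)] and r' = has_pattern_imp_sorted[OF assms(2)]
  have "map (pattern_key x) r = map (pattern_key x) r'"
  proof (rule sorted_distinct_set_unique)
    show "distinct (map (pattern_key x) r)" "distinct (map (pattern_key x) r')"
      using r r' inj_pattern_key by (auto simp: distinct_map inj_on_def)
  qed (use r r' in auto)
  then show ?thesis using inj_pattern_key by (simp add: inj_map_eq_map)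
qed

lemma has_pattern_exists: "\<exists>r. has_pattern x d r"
proof -
  define r where "r = sort_key (pattern_key x) [0..<Suc d]"
  have dr: "distinct r" and sr: "set r = {0..d}" and lr: "length r = Suc d"
    by (auto simp: r_def length_sort)
  have so: "sorted (map (pattern_key x) r)" by (simp add: r_def)
  have "x (r ! (l - 1)) \<ge> x (r ! l) \<and> (x (r ! (l - 1)) = x (r ! l) \<longrightarrow> r ! (l - 1) > r ! l)"
    if l: "l \<in> {1..d}" for l
  proof -
    have "pattern_key x (r ! (l - 1)) \<le> pattern_key x (r ! l)"
      using sorted_nth_mono[OF so, of "l - 1" l] l lr by auto
    moreover have "r ! (l - 1) \<noteq> r ! l" using dr l lr by (auto simp: nth_eq_iff_index_eq)
    then have "pattern_key x (r ! (l - 1)) \<noteq> pattern_key x (r ! l)"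
      using inj_pattern_key by (auto simp: inj_on_def)
    ultimately have "pattern_key x (r ! (l - 1)) < pattern_key x (r ! l)" by simp
    then show ?thesis unfolding pattern_key_less_iff by auto
  qed
  then have "has_pattern x d r" using dr sr by (auto simp: has_pattern_def ord_patterns_def)
  then show ?thesis by blast
qed

lemma finite_ord_patterns: "finite (ord_patterns d)"
proof -
  have "ord_patterns d \<subseteq> {r. set r \<subseteq> {0..d} \<and> length r = Suc d}"
    by (auto simp: ord_patterns_def distinct_card[symmetric])
  then show ?thesis by (rule finite_subset) (rule finite_lists_length_eq, simp)
qed

context mpt
begin

lemma sets_ordinal_pattern_set:
  fixes X :: "'a \<Rightarrow> real ^ 'n"
  assumes X: "X \<in> borel_measurable M" and \<pi>: "\<forall>i. \<pi> i \<in> ord_patterns d"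
  shows "{w \<in> space M. \<forall>i. has_pattern (\<lambda>j. X ((T ^^ (d - j)) w) $ i) d (\<pi> i)} \<in> sets M"
proof -
  have X_comp: "(\<lambda>w. X ((T ^^ k) w) $ i) \<in> borel_measurable M" for k i
  proof -
    have "(\<lambda>x :: real ^ 'n. x $ i) \<in> borel_measurable borel"
      by (intro borel_measurable_continuous_onI continuous_on_component continuous_on_id)
    from measurable_comp[OF measurable_comp[OF measurable_funpow X] this] show ?thesis
      by (simp add: comp_def)
  qed
  have "{w \<in> space M. \<forall>i. has_pattern (\<lambda>j. X ((T ^^ (d - j)) w) $ i) d (\<pi> i)}
    = {w \<in> space M. \<forall>i. \<forall>l\<in>{1..d}.
         X ((T ^^ (d - \<pi> i ! (l - 1))) w) $ i \<ge> X ((T ^^ (d - \<pi> i ! l)) w) $ i \<and>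
         (X ((T ^^ (d - \<pi> i ! (l - 1))) w) $ i = X ((T ^^ (d - \<pi> i ! l)) w) $ i \<longrightarrow>
            \<pi> i ! (l - 1) > \<pi> i ! l)}"
    using \<pi> by (auto simp: has_pattern_def)
  also have "\<dots> \<in> sets M" using X_comp by measurable
  finally show ?thesis .
qed

lemma finite_partition_ordinal_partition:
  fixes X :: "'a \<Rightarrow> real ^ 'n"
  assumes X: "X \<in> borel_measurable M"
  shows "finite_partition M (ordinal_partition M T X d)"
proof -
  define S where "S \<pi> = {w \<in> space M. \<forall>i. has_pattern (\<lambda>j. X ((T ^^ (d - j)) w) $ i) d (\<pi> i)}"
    for \<pi> :: "'n \<Rightarrow> nat list"
  define Pats where "Pats = {\<pi> :: 'n \<Rightarrow> nat list. \<forall>i. \<pi> i \<in> ord_patterns d}"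
  have eq: "ordinal_partition M T X d = S ` Pats" unfolding ordinal_partition_def S_def Pats_def by auto
  have "Pats = Pi\<^sub>E UNIV (\<lambda>_. ord_patterns d)" by (auto simp: Pats_def PiE_UNIV_domain)
  then have "finite Pats" by (simp add: finite_PiE finite_ord_patterns)
  moreover have "S ` Pats \<subseteq> sets M" using sets_ordinal_pattern_set[OF X] by (auto simp: S_def Pats_def)
  moreover have "\<Union> (S ` Pats) = space M"
  proof (intro equalityI subsetI)
    fix w assume w: "w \<in> space M"
    have "\<forall>i. \<exists>r. has_pattern (\<lambda>j. X ((T ^^ (d - j)) w) $ i) d r" using has_pattern_exists by blast
    then obtain \<pi> where "\<And>i. has_pattern (\<lambda>j. X ((T ^^ (d - j)) w) $ i) d (\<pi> i)" by metis
    then have "\<pi> \<in> Pats" "w \<in> S \<pi>" using w by (auto simp: Pats_def S_def has_pattern_def)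
    then show "w \<in> \<Union> (S ` Pats)" by blast
  qed (auto simp: S_def)
  moreover have "S \<pi> \<inter> S \<pi>' = {}" if "S \<pi> \<noteq> S \<pi>'" for \<pi> \<pi>'
  proof -
    have "\<pi> = \<pi>'" if "w \<in> S \<pi>" "w \<in> S \<pi>'" for w
    proof
      show "\<pi> i = \<pi>' i" for i
        by (rule has_pattern_unique[of "\<lambda>j. X ((T ^^ (d - j)) w) $ i" d]) (use that in \<open>auto simp: S_def\<close>)
    qed
    then show ?thesis using \<open>S \<pi> \<noteq> S \<pi>'\<close> by blast
  qed
  ultimately show ?thesis by (auto simp: finite_partition_def eq)
qed

end

theorem lemma1:
  fixes M :: "'a::topological_space measure" and T :: "'a \<Rightarrow> 'a"
    and X :: "'a \<Rightarrow> real ^ 'n"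
  assumes "mpds M T"
    and "X \<in> borel_measurable M"
    and "(\<lambda>d. ereal (part_KS M T (ordinal_partition M T X d))) \<longlonglongrightarrow> KS_entropy M T"
  shows "((\<exists>d0\<ge>1. \<forall>d\<ge>d0. markov_prop M T (ordinal_partition M T X d)) \<longrightarrow>
            (\<lambda>d. ereal (cond_entropy_ord M T X d)) \<longlonglongrightarrow> KS_entropy M T)
       \<and> (\<forall>d\<ge>1. generating M T (ordinal_partition M T X d) \<and> markov_prop M T (ordinal_partition M T X d)
            \<longrightarrow> KS_entropy M T = ereal (cond_entropy_ord M T X d))"
proof -
  have "prob_space M" "T \<in> measurable M M"
    and "\<forall>B \<in> sets M. measure M (T -` B \<inter> space M) = measure M B"
    using assms(1) unfolding mpds_def by blast+
  then interpret mpt M T by (simp add: mpt_def mpt_axioms_def)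
  have P: "finite_partition M (ordinal_partition M T X d)" for d
    by (rule finite_partition_ordinal_partition[OF assms(2)])
  have markov: "part_KS M T (ordinal_partition M T X d) = cond_entropy_ord M T X d"
    if "markov_prop M T (ordinal_partition M T X d)" for d
    using part_KS_markov[OF P that] by (simp add: cond_entropy_ord_def)
  show ?thesis
  proof (intro conjI impI allI)
    assume "\<exists>d0\<ge>1. \<forall>d\<ge>d0. markov_prop M T (ordinal_partition M T X d)"
    then have ev: "eventually (\<lambda>d. ereal (part_KS M T (ordinal_partition M T X d))
        = ereal (cond_entropy_ord M T X d)) sequentially"
      unfolding eventually_sequentially using markov by auto
    then show "(\<lambda>d. ereal (cond_entropy_ord M T X d)) \<longlonglongrightarrow> KS_entropy M T"
      using assms(3) tendsto_cong[OF ev] by simp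
  next
    fix d :: nat
    assume "generating M T (ordinal_partition M T X d) \<and> markov_prop M T (ordinal_partition M T X d)"
    then show "KS_entropy M T = ereal (cond_entropy_ord M T X d)"
      using KS_entropy_eq_part_KS_generating[OF P, of d] markov[of d] by simp
  qed
qed

end
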